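(* Let $G$ be a group, $V_1,V_2$ finite-dimensional Yetter–Drinfeld modules over $\Bbbk G$ and $V=V_1\oplus V_2$ with braiding $c$. Assume $c^2|_{V_2\otimes V_1}=\mathrm{id}_{V_2\otimes V_1}$ and $\dim V_g\le1$ for all $g\in G$. Let $W_1\subseteq V_1$, $W_2\subseteq V_2$ be $\Bbbk G$-subcomodules and $W=W_1\oplus W_2$. Then the following are equivalent: (1) $\langle W\rangle$ is the only $\mathbb N_0$-graded left coideal subalgebra $K$ of $\mathcal B(V)$ with $K(1)=W$; (2) $\langle W_1\rangle$ is the only $\mathbb N_0$-graded left coideal subalgebra $K_1$ of $\mathcal B(V_1)$ with $K_1(1)=W_1$, and $\langle W_2\rangle$ is the only $\mathbb N_0$-graded left coideal subalgebra $K_2$ of $\mathcal B(V_2)$ with $K_2(1)=W_2$.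
   Context: $\Bbbk$ algebraically closed of characteristic $0$. Yetter–Drinfeld modules over $\Bbbk G$: $G$-graded spaces with $G$-action, $g\cdot V_h\subseteq V_{ghg^{-1}}$, braiding $c(v\otimes w)=g\cdot w\otimes v$ for $v\in V_g$. $\mathcal B(V)$ is the Nichols algebra; $\mathcal B(V_i)$ is identified with the subalgebra of $\mathcal B(V)$ generated by $V_i$. An $\mathbb N_0$-graded left coideal subalgebra is an $\mathbb N_0$-graded subalgebra $K$ containing $1$ with $\Delta(K)\subseteq\mathcal B\otimes K$. $\langle S\rangle$ is the subalgebra generated by $S$. *)

theory Defs
  imports Main "HOL-Computational_Algebra.Polynomial"
begin

text \<open>The group G is a type 'g of class group_add (written additively,
not necessarily commutative); conjugation g h g^-1 is written g + h - g.
A Yetter-Drinfeld module V over kG with dim V_g <= 1 for all g is given by its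
(finite, conjugation-closed) support S and a basis x_s (s in S) with
  g . x_s = act g s * x_(g + s - g).
Elements of T^n(V) are functions on words (lists over G) supported on words of
length n over S.  The braiding on V (x) V is c(x_s (x) x_t) = act s t * x_(s+t-s) (x) x_s.
The Nichols algebra B(V) is realised as the image of the quantum symmetrizers
Omega_n inside T(V) (= quantum shuffle algebra), where the product is induced
from T(V) via Omega and the coproduct is deconcatenation.\<close>

type_synonym ('g,'k) tvec = "'g list \<Rightarrow> 'k"

definition ebasis :: "'g list \<Rightarrow> ('g,'k::field) tvec" where
  "ebasis w = (\<lambda>u. if u = w then 1 else 0)"

text \<open>Braiding c acting on tensor positions i, i+1 (0-indexed).\<close>
definition braid :: "('g::group_add \<Rightarrow> 'g \<Rightarrow> 'k::field) \<Rightarrow> nat \<Rightarrow> ('g,'k) tvec \<Rightarrow> ('g,'k) tvec" where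
  "braid act i f = (\<lambda>w. if Suc i < length w then
       (let a = w ! i; b = w ! Suc i; s = b; t = - b + a + b
        in act s t * f (w[i := s, Suc i := t]))
     else f w)"

function chain :: "('g::group_add \<Rightarrow> 'g \<Rightarrow> 'k::field) \<Rightarrow> nat \<Rightarrow> nat \<Rightarrow> ('g,'k) tvec \<Rightarrow> ('g,'k) tvec" where
  "chain act k m f = (if k < m then chain act (Suc k) m (braid act k f) else f)"
  by pat_completeness auto
termination by (relation "measure (\<lambda>(_,k,m,_). m - k)") auto

declare chain.simps[simp del]

text \<open>Quantum symmetrizer Omega_n = sum over S_n of T_sigma, via
  Omega_(n+1) = (Omega_n (x) id) o (sum_(k=0..n) c_(n-1) ... c_k).\<close>
fun omega :: "('g::group_add \<Rightarrow> 'g \<Rightarrow> 'k::field) \<Rightarrow> nat \<Rightarrow> ('g,'k) tvec \<Rightarrow> ('g,'k) tvec" where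
  "omega act 0 f = f"
| "omega act (Suc n) f = omega act n (\<lambda>w. \<Sum>k\<le>n. chain act k n f w)"

definition lspan :: "('a \<Rightarrow> 'k::field) set \<Rightarrow> ('a \<Rightarrow> 'k) set" where
  "lspan X = {f. \<exists>ps. set (map snd ps) \<subseteq> X \<and>
                  f = (\<lambda>u. sum_list (map (\<lambda>(c, x). c * x u) ps))}"

definition vsubspace :: "('a \<Rightarrow> 'k::field) set \<Rightarrow> bool" where
  "vsubspace A \<longleftrightarrow> (\<lambda>_. 0) \<in> A \<and> (\<forall>x\<in>A. \<forall>y\<in>A. (\<lambda>u. x u + y u) \<in> A) \<and> (\<forall>c. \<forall>x\<in>A. (\<lambda>u. c * x u) \<in> A)"

definition Tsp :: "'g set \<Rightarrow> nat \<Rightarrow> ('g,'k::field) tvec set" where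
  "Tsp S n = {f. \<forall>w. f w \<noteq> 0 \<longrightarrow> length w = n \<and> set w \<subseteq> S}"

definition Nichols :: "('g::group_add \<Rightarrow> 'g \<Rightarrow> 'k::field) \<Rightarrow> 'g set \<Rightarrow> nat \<Rightarrow> ('g,'k) tvec set" where
  "Nichols act S n = lspan {omega act n (ebasis w) | w. length w = n \<and> set w \<subseteq> S}"

definition tens :: "('g \<Rightarrow> 'k::field) list \<Rightarrow> ('g,'k) tvec" where
  "tens vs = (\<lambda>u. if length u = length vs then (\<Prod>k<length vs. (vs ! k) (u ! k)) else 0)"

definition tconcat :: "nat \<Rightarrow> nat \<Rightarrow> ('g,'k::field) tvec \<Rightarrow> ('g,'k) tvec \<Rightarrow> ('g,'k) tvec" where
  "tconcat i j a b = (\<lambda>w. if length w = i + j then a (take i w) * b (drop i w) else 0)"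

definition deconc :: "nat \<Rightarrow> nat \<Rightarrow> ('g,'k::field) tvec \<Rightarrow> ('g list \<times> 'g list \<Rightarrow> 'k)" where
  "deconc i j f = (\<lambda>(u, v). if length u = i \<and> length v = j then f (u @ v) else 0)"

definition tspan :: "('a \<Rightarrow> 'k::field) set \<Rightarrow> ('b \<Rightarrow> 'k) set \<Rightarrow> ('a \<times> 'b \<Rightarrow> 'k) set" where
  "tspan A C = {h. \<exists>ps. set ps \<subseteq> A \<times> C \<and>
                   h = (\<lambda>(u, v). sum_list (map (\<lambda>(a, c). a u * c v) ps))}"

definition graded_lcs :: "('g::group_add \<Rightarrow> 'g \<Rightarrow> 'k::field) \<Rightarrow> 'g set \<Rightarrow> (nat \<Rightarrow> ('g,'k) tvec set) \<Rightarrow> bool" where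
  "graded_lcs act S K \<longleftrightarrow>
     (\<forall>n. vsubspace (K n) \<and> K n \<subseteq> Nichols act S n)
   \<and> ebasis [] \<in> K 0
   \<and> (\<forall>i j a b. a \<in> Tsp S i \<and> b \<in> Tsp S j \<and> omega act i a \<in> K i \<and> omega act j b \<in> K j
          \<longrightarrow> omega act (i + j) (tconcat i j a b) \<in> K (i + j))
   \<and> (\<forall>i j f. f \<in> K (i + j) \<longrightarrow> deconc i j f \<in> tspan (Nichols act S i) (K j))"

definition genW :: "('g::group_add \<Rightarrow> 'g \<Rightarrow> 'k::field) \<Rightarrow> ('g \<Rightarrow> 'k) set \<Rightarrow> nat \<Rightarrow> ('g,'k) tvec set" where
  "genW act W n = lspan {omega act n (tens vs) | vs. length vs = n \<and> set vs \<subseteq> W}"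

definition unique_lcs :: "('g::group_add \<Rightarrow> 'g \<Rightarrow> 'k::field) \<Rightarrow> 'g set \<Rightarrow> ('g \<Rightarrow> 'k) set \<Rightarrow> bool" where
  "unique_lcs act S W \<longleftrightarrow> graded_lcs act S (genW act W) \<and>
     (\<forall>K. graded_lcs act S K \<and> K 1 = (\<lambda>v. tens [v]) ` W \<longrightarrow> K = genW act W)"

definition subcomodule :: "'g set \<Rightarrow> ('g \<Rightarrow> 'k::field) set \<Rightarrow> bool" where
  "subcomodule S W \<longleftrightarrow> vsubspace W \<and> (\<forall>w\<in>W. \<forall>g. w g \<noteq> 0 \<longrightarrow> g \<in> S)
     \<and> (\<forall>w\<in>W. \<forall>g. (\<lambda>x. if x = g then w g else 0) \<in> W)"

definition YD_data :: "('g::group_add \<Rightarrow> 'g \<Rightarrow> 'k::field) \<Rightarrow> 'g set \<Rightarrow> bool" where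
  "YD_data act S \<longleftrightarrow> finite S \<and> (\<forall>g\<in>UNIV. \<forall>s\<in>S. g + s - g \<in> S)
     \<and> (\<forall>s\<in>S. act 0 s = 1)
     \<and> (\<forall>g h. \<forall>s\<in>S. act (g + h) s = act g (h + s - h) * act h s)"

end

theory Submission
  imports Defs
begin

(* An element of B(V) of positive degree is determined by its right derivatives, which satisfy a
   twisted Leibniz rule, and B(V) is stable under left derivatives. Hence, for a subcomodule W
   spanned by the letters A, the elements of B(V) killed by the right derivatives with respect to
   all letters outside A form the largest graded left coideal subalgebra K(W) with K(W)(1) = W, and
   <W> is the only one iff K(W) is contained in <W>.
   If c^2 is the identity on V_2 \<otimes> V_1, the letters of V_1 and V_2 commute in B(V) up to
   nonzero scalars, so an element of B(V) is determined by its values on the words u v with u over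
   V_1 and v over V_2. On these words an element of K(W_1 \<oplus> W_2) is a sum of tensor products
   of elements of K(W_1) and K(W_2); conversely K(W_i) lies in K(W), and restricting to the words
   over V_i maps <W> into <W_i>. Hence K(W) lies in <W> iff K(W_i) lies in <W_i> for i = 1, 2. *)

section \<open>The quantum symmetrizer on words\<close>

definition linop :: "(('a \<Rightarrow> 'k::field) \<Rightarrow> ('b \<Rightarrow> 'k)) \<Rightarrow> bool" where
  "linop \<Phi> \<longleftrightarrow> (\<forall>F G. \<Phi> (\<lambda>w. F w + G w) = (\<lambda>w. \<Phi> F w + \<Phi> G w))
      \<and> (\<forall>c F. \<Phi> (\<lambda>w. c * F w) = (\<lambda>w. c * \<Phi> F w))"

lemma linop_add: "linop \<Phi> \<Longrightarrow> \<Phi> (\<lambda>w. F w + G w) = (\<lambda>w. \<Phi> F w + \<Phi> G w)"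
  unfolding linop_def by blast

lemma linop_smult: "linop \<Phi> \<Longrightarrow> \<Phi> (\<lambda>w. c * F w) = (\<lambda>w. c * \<Phi> F w)"
  unfolding linop_def by blast

lemma linop_zero: "linop \<Phi> \<Longrightarrow> \<Phi> (\<lambda>w. 0) = (\<lambda>w. 0)"
  using linop_smult[of \<Phi> 0 "\<lambda>w. 0"] by simp

lemma linop_sum:
  assumes "linop \<Phi>" "finite I"
  shows "\<Phi> (\<lambda>w. \<Sum>i\<in>I. F i w) = (\<lambda>w. \<Sum>i\<in>I. \<Phi> (F i) w)"
  using assms(2) by induction (simp_all add: linop_zero[OF assms(1)] linop_add[OF assms(1)])

lemma linop_comp: "linop \<Phi> \<Longrightarrow> linop \<Psi> \<Longrightarrow> linop (\<lambda>F. \<Phi> (\<Psi> F))"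
  unfolding linop_def by simp

lemma linop_braid: "linop (braid act i)"
  unfolding linop_def braid_def by (auto simp: Let_def fun_eq_iff algebra_simps)

lemma chain_step: "chain act k m F = (if k < m then chain act (Suc k) m (braid act k F) else F)"
  by (rule chain.simps)

lemma chain_induct_braid:
  assumes "\<And>i F. i < m \<Longrightarrow> P F \<Longrightarrow> P (braid act i F)" "P F"
  shows "P (chain act k m F)"
  using assms(2)
proof (induction "m - k" arbitrary: k F)
  case 0
  then show ?case by (subst chain_step) simp
next
  case (Suc d)
  then show ?case using assms(1)[of k F] by (subst chain_step) simp
qed

lemma chain_commute:
  assumes "\<And>i F. i < m \<Longrightarrow> P F \<Longrightarrow> P (braid act i F)"
    and "\<And>i F. i < m \<Longrightarrow> P F \<Longrightarrow> \<Phi> (braid act i F) = braid act i (\<Phi> F)"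
    and "P F"
  shows "\<Phi> (chain act k m F) = chain act k m (\<Phi> F)"
  using assms(3)
proof (induction "m - k" arbitrary: k F)
  case 0
  then show ?case by (simp add: chain_step[of act k m])
next
  case (Suc d)
  then have "k < m" by simp
  then show ?case
    using Suc assms(1,2)[of k F] by (simp add: chain_step[of act k m])
qed

lemma linop_chain: "linop (chain act k m)"
proof (induction "m - k" arbitrary: k)
  case 0
  then show ?case by (simp add: linop_def chain_step[of act k m])
next
  case (Suc d)
  then have "k < m" by simp
  then have "chain act k m = (\<lambda>F. chain act (Suc k) m (braid act k F))"
    by (simp add: fun_eq_iff chain_step[of act k m])
  moreover have "linop (chain act (Suc k) m)" using Suc by simp
  ultimately show ?case using linop_comp[OF _ linop_braid] by simp
qed

definition psym :: "('g::group_add \<Rightarrow> 'g \<Rightarrow> 'k::field) \<Rightarrow> nat \<Rightarrow> ('g,'k) tvec \<Rightarrow> ('g,'k) tvec" where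
  "psym act m F = (\<lambda>w. \<Sum>k\<le>m. chain act k m F w)"

lemma omega_Suc: "omega act (Suc n) F = omega act n (psym act n F)"
  unfolding psym_def by (rule omega.simps(2))

declare omega.simps(2)[simp del]

lemma psym_0: "psym act 0 F = F"
  by (simp add: psym_def fun_eq_iff chain_step)

lemma omega_1: "omega act (Suc 0) F = F"
  by (simp add: omega_Suc psym_0)

lemma omega_2: "omega act (Suc (Suc 0)) F = psym act (Suc 0) F"
  by (simp add: omega_Suc psym_0)

lemma linop_psym: "linop (psym act m)"
  unfolding linop_def psym_def
  by (simp add: linop_add[OF linop_chain] linop_smult[OF linop_chain] sum.distrib sum_distrib_left)

lemma linop_omega: "linop (omega act n)"
proof (induction n)
  case 0
  then show ?case unfolding linop_def by simp
next
  case (Suc n)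
  have "omega act (Suc n) = (\<lambda>F. omega act n (psym act n F))" by (rule ext) (rule omega_Suc)
  then show ?case using linop_comp[OF Suc linop_psym] by simp
qed

lemma omega_smult: "omega act n (\<lambda>w. c * F w) = (\<lambda>w. c * omega act n F w)"
  by (rule linop_smult[OF linop_omega])

lemma omega_zero: "omega act n (\<lambda>w. 0) = (\<lambda>w. 0)"
  by (rule linop_zero[OF linop_omega])

definition conjg :: "'g::group_add \<Rightarrow> 'g \<Rightarrow> 'g" where
  "conjg x y = - x + y + x"

lemma conjg_inverse: "b + conjg b a - b = a"
  by (simp only: conjg_def diff_conv_add_uminus add.assoc) simp

lemma add_conjg: "g + conjg g b = b + g"
  by (simp only: conjg_def diff_conv_add_uminus add.assoc) simp

lemma conjg_conjg: "conjg (conjg g b) (conjg g a) = conjg g (conjg b a)"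
  by (simp only: conjg_def diff_conv_add_uminus add.assoc minus_add minus_minus) simp

lemma conjg_conj: "conjg g b + conjg g t - conjg g b = conjg g (b + t - b)"
  by (simp only: conjg_def diff_conv_add_uminus add.assoc minus_add minus_minus) simp

lemma conjg_commute:
  assumes "a + b = b + a" shows "conjg b a = a"
proof -
  have "conjg b a = - b + (a + b)" by (simp add: conjg_def add.assoc)
  also have "\<dots> = a" unfolding assms by (simp add: add.assoc[symmetric])
  finally show ?thesis .
qed

lemma braid_split:
  "length p = i \<Longrightarrow> braid act i F (p @ a # b # q) = act b (conjg b a) * F (p @ b # conjg b a # q)"
  by (simp add: braid_def Let_def nth_append list_update_append conjg_def)

lemma braid_short: "\<not> Suc i < length w \<Longrightarrow> braid act i F w = F w"
  by (simp add: braid_def)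

lemma split_at_pair:
  assumes "Suc i < length w"
  obtains p a b q where "w = p @ a # b # q" "length p = i"
proof
  show "w = take i w @ w ! i # w ! Suc i # drop (Suc (Suc i)) w"
    using assms by (simp add: Cons_nth_drop_Suc)
qed (use assms in simp)

definition supported :: "('a list \<Rightarrow> bool) \<Rightarrow> ('a list \<Rightarrow> 'k::zero) \<Rightarrow> bool" where
  "supported Q F \<longleftrightarrow> (\<forall>w. F w \<noteq> 0 \<longrightarrow> Q w)"

abbreviation homog :: "('a list \<Rightarrow> 'k::zero) \<Rightarrow> nat \<Rightarrow> bool" where
  "homog F n \<equiv> supported (\<lambda>w. length w = n) F"

abbreviation supp_in :: "'a set \<Rightarrow> ('a list \<Rightarrow> 'k::zero) \<Rightarrow> bool" where
  "supp_in S F \<equiv> supported (\<lambda>w. set w \<subseteq> S) F"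

definition swap_stable :: "('g::group_add list \<Rightarrow> bool) \<Rightarrow> bool" where
  "swap_stable Q \<longleftrightarrow> (\<forall>p a b q. Q (p @ b # conjg b a # q) \<longrightarrow> Q (p @ a # b # q))"

lemma supportedD: "supported Q F \<Longrightarrow> F w \<noteq> 0 \<Longrightarrow> Q w"
  unfolding supported_def by blast

lemma supported_zero: "supported Q F \<Longrightarrow> \<not> Q w \<Longrightarrow> F w = 0"
  unfolding supported_def by blast

lemma supported_mono: "supported Q F \<Longrightarrow> (\<And>w. Q w \<Longrightarrow> Q' w) \<Longrightarrow> supported Q' F"
  unfolding supported_def by blast

lemma supported_add:
  fixes F G :: "'a list \<Rightarrow> 'k::field"
  shows "supported Q F \<Longrightarrow> supported Q G \<Longrightarrow> supported Q (\<lambda>w. F w + G w)"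
  unfolding supported_def by (metis add_0)

lemma supported_smult:
  fixes F :: "'a list \<Rightarrow> 'k::field"
  shows "supported Q F \<Longrightarrow> supported Q (\<lambda>w. c * F w)"
  unfolding supported_def by simp

lemma supported_sum:
  fixes F :: "'i \<Rightarrow> 'a list \<Rightarrow> 'k::field"
  shows "(\<And>i. i \<in> I \<Longrightarrow> supported Q (F i)) \<Longrightarrow> supported Q (\<lambda>w. \<Sum>i\<in>I. F i w)"
  unfolding supported_def by (metis (mono_tags, lifting) sum.neutral)

lemma supported_braid:
  assumes "swap_stable Q" "supported Q F"
  shows "supported Q (braid act i F)"
  unfolding supported_def
proof (intro allI impI)
  fix w assume nz: "braid act i F w \<noteq> 0"
  show "Q w"
  proof (cases "Suc i < length w")
    case True
    then obtain p a b q where w: "w = p @ a # b # q" "length p = i" by (rule split_at_pair)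
    then have "F (p @ b # conjg b a # q) \<noteq> 0" using nz by (simp add: braid_split)
    then show ?thesis using assms unfolding w swap_stable_def supported_def by blast
  next
    case False
    then show ?thesis using nz assms(2) by (simp add: braid_short supported_def)
  qed
qed

lemma supported_psym: "swap_stable Q \<Longrightarrow> supported Q F \<Longrightarrow> supported Q (psym act m F)"
  unfolding psym_def
  by (rule supported_sum, rule chain_induct_braid[where P = "supported Q"]) (simp_all add: supported_braid)

lemma supported_omega: "swap_stable Q \<Longrightarrow> supported Q F \<Longrightarrow> supported Q (omega act m F)"
  by (induction m arbitrary: F) (simp_all add: omega_Suc supported_psym)

definition conj_closed :: "'g::group_add set \<Rightarrow> bool" where
  "conj_closed S \<longleftrightarrow> (\<forall>g. \<forall>s\<in>S. g + s - g \<in> S)"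

lemma conj_closed_conjg_iff: "conj_closed S \<Longrightarrow> conjg b a \<in> S \<longleftrightarrow> a \<in> S"
proof
  assume "conj_closed S" "conjg b a \<in> S"
  then have "b + conjg b a - b \<in> S" unfolding conj_closed_def by blast
  then show "a \<in> S" by (simp only: conjg_inverse)
next
  assume "conj_closed S" "a \<in> S"
  then have "- b + a - - b \<in> S" unfolding conj_closed_def by blast
  then show "conjg b a \<in> S" by (simp only: conjg_def diff_conv_add_uminus minus_minus)
qed

lemma swap_stable_length: "swap_stable (\<lambda>w. length w = n)"
  by (simp add: swap_stable_def)

lemma swap_stable_letters: "conj_closed S \<Longrightarrow> swap_stable (\<lambda>w. set w \<subseteq> S)"
  by (simp add: swap_stable_def conj_closed_conjg_iff)

lemma homog_psym: "homog F n \<Longrightarrow> homog (psym act m F) n"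
  by (rule supported_psym[OF swap_stable_length])

lemma homog_omega: "homog F n \<Longrightarrow> homog (omega act m F) n"
  by (rule supported_omega[OF swap_stable_length])

lemma supp_in_psym: "conj_closed S \<Longrightarrow> supp_in S F \<Longrightarrow> supp_in S (psym act m F)"
  by (rule supported_psym[OF swap_stable_letters])

lemma supp_in_omega: "conj_closed S \<Longrightarrow> supp_in S F \<Longrightarrow> supp_in S (omega act m F)"
  by (rule supported_omega[OF swap_stable_letters])

section \<open>Right derivatives and the Leibniz rule\<close>

definition rderiv :: "'g \<Rightarrow> ('g,'k) tvec \<Rightarrow> ('g,'k) tvec" where
  "rderiv x F = (\<lambda>u. F (u @ [x]))"

definition lderiv :: "'g \<Rightarrow> ('g,'k) tvec \<Rightarrow> ('g,'k) tvec" where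
  "lderiv y F = (\<lambda>v. F (y # v))"

definition gcoeff :: "('g::group_add \<Rightarrow> 'g \<Rightarrow> 'k::field) \<Rightarrow> 'g \<Rightarrow> 'g list \<Rightarrow> 'k" where
  "gcoeff act x v = prod_list (map (\<lambda>y. act x (conjg x y)) v)"

definition gact :: "('g::group_add \<Rightarrow> 'g \<Rightarrow> 'k::field) \<Rightarrow> 'g \<Rightarrow> ('g,'k) tvec \<Rightarrow> ('g,'k) tvec" where
  "gact act x F = (\<lambda>v. gcoeff act x v * F (map (conjg x) v))"

lemma gcoeff_append: "gcoeff act x (u @ v) = gcoeff act x u * gcoeff act x v"
  by (simp add: gcoeff_def)

lemma gcoeff_Nil [simp]: "gcoeff act x [] = 1"
  by (simp add: gcoeff_def)

lemma gcoeff_Cons: "gcoeff act x (a # v) = act x (conjg x a) * gcoeff act x v"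
  by (simp add: gcoeff_def)

lemma homog_rderiv: "homog F (Suc n) \<Longrightarrow> homog (rderiv x F) n"
  unfolding supported_def rderiv_def by auto

lemma homog_lderiv: "homog F (Suc n) \<Longrightarrow> homog (lderiv x F) n"
  unfolding supported_def lderiv_def by auto

lemma supp_in_rderiv: "supp_in S F \<Longrightarrow> supp_in S (rderiv x F)"
  unfolding supported_def rderiv_def by fastforce

lemma supp_in_lderiv: "supp_in S F \<Longrightarrow> supp_in S (lderiv x F)"
  unfolding supported_def lderiv_def by fastforce

lemma homog_gact: "homog F n \<Longrightarrow> homog (gact act g F) n"
  unfolding supported_def gact_def by auto

lemma supp_in_gact:
  assumes "conj_closed S" "supp_in S F"
  shows "supp_in S (gact act g F)"
  unfolding supported_def
proof (intro allI impI)
  fix w assume "gact act g F w \<noteq> 0"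
  then have "F (map (conjg g) w) \<noteq> 0" by (auto simp: gact_def)
  then have "set (map (conjg g) w) \<subseteq> S" by (rule supportedD[OF assms(2)])
  then show "set w \<subseteq> S" by (auto simp: conj_closed_conjg_iff[OF assms(1)])
qed

lemma homog_tconcat: "homog (tconcat i j a b) (i + j)"
  unfolding supported_def tconcat_def by auto

lemma supp_in_tconcat: "supp_in S a \<Longrightarrow> supp_in S b \<Longrightarrow> supp_in S (tconcat i j a b)"
  unfolding supported_def tconcat_def
  by (metis (no_types, lifting) append_take_drop_id le_sup_iff mult_not_zero set_append)

lemma tconcat_0l: "homog b j \<Longrightarrow> tconcat 0 j a b = (\<lambda>w. a [] * b w)"
  unfolding tconcat_def supported_def by (auto simp: fun_eq_iff)

lemma tconcat_0r: "homog a i \<Longrightarrow> tconcat i 0 a b = (\<lambda>w. b [] * a w)"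
  unfolding tconcat_def supported_def by (auto simp: fun_eq_iff)

lemma eq_by_rderiv:
  assumes "homog F (Suc n)" "homog G (Suc n)" "\<And>x. rderiv x F = rderiv x G"
  shows "F = G"
proof (rule ext)
  fix w
  show "F w = G w"
  proof (cases w rule: rev_cases)
    case Nil
    then show ?thesis
      using supported_zero[OF assms(1), of "[]"] supported_zero[OF assms(2), of "[]"] by simp
  next
    case (snoc u x)
    then show ?thesis using assms(3)[of x] by (simp add: rderiv_def fun_eq_iff)
  qed
qed

lemma zero_by_rderiv: "homog F (Suc n) \<Longrightarrow> (\<And>x. rderiv x F = (\<lambda>_. 0)) \<Longrightarrow> F = (\<lambda>_. 0)"
  by (rule eq_by_rderiv[where n = n]) (simp_all add: supported_def rderiv_def)

lemma chain_pass:
  "length u = k \<Longrightarrow>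
   chain act k (k + length v) F (u @ v @ [x]) = gcoeff act x v * F (u @ [x] @ map (conjg x) v)"
proof (induction v arbitrary: k u F)
  case Nil
  then show ?case by (simp add: chain_step)
next
  case (Cons y v)
  have "chain act k (k + length (y # v)) F (u @ (y # v) @ [x])
      = chain act (Suc k) (Suc k + length v) (braid act k F) ((u @ [y]) @ v @ [x])"
    by (simp add: chain_step[of act k])
  also have "\<dots> = gcoeff act x v * braid act k F ((u @ [y]) @ [x] @ map (conjg x) v)"
    using Cons.IH[of "u @ [y]" "Suc k"] Cons.prems by simp
  also have "\<dots> = gcoeff act x (y # v) * F (u @ [x] @ map (conjg x) (y # v))"
    using Cons.prems by (simp add: braid_split gcoeff_Cons)
  finally show ?case .
qed

lemma psym_append_letter:
  assumes "length w = m"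
  shows "psym act m F (w @ [x]) =
    (\<Sum>k\<le>m. gcoeff act x (drop k w) * F (take k w @ [x] @ map (conjg x) (drop k w)))"
  unfolding psym_def
proof (rule sum.cong[OF refl])
  fix k assume "k \<in> {..m}"
  then have "chain act k (k + length (drop k w)) F (take k w @ drop k w @ [x])
      = gcoeff act x (drop k w) * F (take k w @ [x] @ map (conjg x) (drop k w))"
    using assms by (intro chain_pass) simp
  moreover have "take k w @ drop k w @ [x] = w @ [x]" by (metis append_assoc append_take_drop_id)
  ultimately show "chain act k m F (w @ [x])
      = gcoeff act x (drop k w) * F (take k w @ [x] @ map (conjg x) (drop k w))"
    using assms \<open>k \<in> {..m}\<close> by simp
qed

lemma braid_rderiv:
  assumes "homog G (Suc m)" "Suc i < m"
  shows "rderiv x (braid act i G) = braid act i (rderiv x G)"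
proof (rule ext)
  fix u
  show "rderiv x (braid act i G) u = braid act i (rderiv x G) u"
  proof (cases "Suc i < length u")
    case True
    then obtain p a b q where "u = p @ a # b # q" "length p = i" by (rule split_at_pair)
    then show ?thesis by (simp add: rderiv_def braid_split)
  next
    case False
    then have l: "length (u @ [x]) \<noteq> Suc m" using assms(2) by simp
    have "homog (braid act i G) (Suc m)" by (rule supported_braid[OF swap_stable_length assms(1)])
    then have "braid act i G (u @ [x]) = 0" using l supported_zero by blast
    moreover have "G (u @ [x]) = 0" using l assms(1) supported_zero by blast
    ultimately show ?thesis using False by (simp add: rderiv_def braid_short)
  qed
qed

lemma psym_rderiv:
  assumes "homog G (Suc m)" "n < m"
  shows "rderiv x (psym act n G) = psym act n (rderiv x G)"
proof -
  have "rderiv x (chain act k n G) = chain act k n (rderiv x G)" for k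
  proof (rule chain_commute[where P = "\<lambda>G. homog G (Suc m)"])
    show "homog (braid act i F) (Suc m)" if "homog F (Suc m)" for i F
      by (rule supported_braid[OF swap_stable_length that])
    show "rderiv x (braid act i F) = braid act i (rderiv x F)" if "i < n" "homog F (Suc m)" for i F
      using that assms(2) by (intro braid_rderiv) auto
  qed (rule assms(1))
  then show ?thesis by (simp add: psym_def rderiv_def fun_eq_iff)
qed

lemma omega_rderiv:
  "homog G (Suc m) \<Longrightarrow> n \<le> m \<Longrightarrow> rderiv x (omega act n G) = omega act n (rderiv x G)"
proof (induction n arbitrary: G)
  case (Suc n)
  then show ?case by (simp add: omega_Suc homog_psym psym_rderiv)
qed simp

lemma rderiv_omega_Suc:
  "homog F (Suc n) \<Longrightarrow> rderiv x (omega act (Suc n) F) = omega act n (rderiv x (psym act n F))"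
  using omega_rderiv[where G = "psym act n F" and m = n and n = n] by (simp add: omega_Suc homog_psym)

lemma tconcat_insert_left:
  assumes "k \<le> i" "length u = i" "length v = Suc j"
  shows "gcoeff act x (drop k (u @ v)) *
      tconcat (Suc i) (Suc j) a b (take k (u @ v) @ [x] @ map (conjg x) (drop k (u @ v)))
    = (gcoeff act x (drop k u) * a (take k u @ [x] @ map (conjg x) (drop k u)))
      * (gcoeff act x v * b (map (conjg x) v))"
proof -
  define z where "z = take k u @ [x] @ map (conjg x) (drop k u)"
  have z: "length z = Suc i" using assms by (simp add: z_def)
  have "take k (u @ v) @ [x] @ map (conjg x) (drop k (u @ v)) = z @ map (conjg x) v"
    using assms by (simp add: z_def)
  moreover have "tconcat (Suc i) (Suc j) a b (z @ map (conjg x) v) = a z * b (map (conjg x) v)"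
    using z assms(3) by (simp add: tconcat_def)
  ultimately show ?thesis using assms by (simp add: gcoeff_append z_def)
qed

lemma tconcat_insert_right:
  assumes "k \<le> j" "length u = Suc i" "length v = j"
  shows "gcoeff act x (drop (k + Suc i) (u @ v)) *
      tconcat (Suc i) (Suc j) a b
        (take (k + Suc i) (u @ v) @ [x] @ map (conjg x) (drop (k + Suc i) (u @ v)))
    = a u * (gcoeff act x (drop k v) * b (take k v @ [x] @ map (conjg x) (drop k v)))"
proof -
  have "take (k + Suc i) (u @ v) @ [x] @ map (conjg x) (drop (k + Suc i) (u @ v))
      = u @ (take k v @ [x] @ map (conjg x) (drop k v))"
    using assms by simp
  then show ?thesis using assms by (simp add: tconcat_def)
qed

lemma psym_tconcat_rderiv:
  assumes "homog a (Suc i)" "homog b (Suc j)"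
  shows "rderiv x (psym act (Suc i + j) (tconcat (Suc i) (Suc j) a b)) =
    (\<lambda>w. tconcat (Suc i) j a (rderiv x (psym act j b)) w
       + tconcat i (Suc j) (rderiv x (psym act i a)) (gact act x b) w)"
proof (rule ext)
  fix w :: "'a list"
  let ?F = "tconcat (Suc i) (Suc j) a b"
  let ?t = "\<lambda>k. gcoeff act x (drop k w) * ?F (take k w @ [x] @ map (conjg x) (drop k w))"
  show "rderiv x (psym act (Suc i + j) ?F) w = tconcat (Suc i) j a (rderiv x (psym act j b)) w
      + tconcat i (Suc j) (rderiv x (psym act i a)) (gact act x b) w"
  proof (cases "length w = Suc i + j")
    case False
    have "homog (psym act (Suc i + j) ?F) (Suc i + Suc j)" by (rule homog_psym[OF homog_tconcat])
    then have "psym act (Suc i + j) ?F (w @ [x]) = 0" using False by (simp add: supported_zero)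
    then show ?thesis using False by (simp add: rderiv_def tconcat_def)
  next
    case True
    have "rderiv x (psym act (Suc i + j) ?F) w = (\<Sum>k\<le>i + Suc j. ?t k)"
      unfolding rderiv_def using psym_append_letter[OF True] by simp
    also have "\<dots> = (\<Sum>k\<le>i. ?t k) + (\<Sum>k = Suc i..i + Suc j. ?t k)"
      by (rule sum_up_index_split)
    also have "(\<Sum>k = Suc i..i + Suc j. ?t k) = (\<Sum>k = 0..j. ?t (k + Suc i))"
      using sum.shift_bounds_cl_nat_ivl[of ?t 0 "Suc i" j] by (simp add: add.commute)
    finally have S: "rderiv x (psym act (Suc i + j) ?F) w = (\<Sum>k\<le>i. ?t k) + (\<Sum>k\<le>j. ?t (k + Suc i))"
      by (simp add: atLeast0AtMost)
    obtain u' v' where w': "w = u' @ v'" "length u' = i" "length v' = Suc j"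
      using True by (intro that[of "take i w" "drop i w"]) simp_all
    obtain u v where w: "w = u @ v" "length u = Suc i" "length v = j"
      using True by (intro that[of "take (Suc i) w" "drop (Suc i) w"]) simp_all
    have "?t k = (gcoeff act x (drop k u') * a (take k u' @ [x] @ map (conjg x) (drop k u')))
        * (gcoeff act x v' * b (map (conjg x) v'))" if "k \<le> i" for k
      by (simp only: w'(1) tconcat_insert_left[OF that w'(2,3)])
    then have SA: "(\<Sum>k\<le>i. ?t k) = psym act i a (u' @ [x]) * gact act x b v'"
      by (simp add: psym_append_letter[OF w'(2)] sum_distrib_right gact_def)
    have "?t (k + Suc i) = a u * (gcoeff act x (drop k v) * b (take k v @ [x] @ map (conjg x) (drop k v)))"
      if "k \<le> j" for k
      by (simp only: w(1) tconcat_insert_right[OF that w(2,3)])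
    then have SB: "(\<Sum>k\<le>j. ?t (k + Suc i)) = a u * psym act j b (v @ [x])"
      by (simp add: psym_append_letter[OF w(3)] sum_distrib_left)
    have "tconcat (Suc i) j a (rderiv x (psym act j b)) w = a u * psym act j b (v @ [x])"
      using w by (simp add: tconcat_def rderiv_def)
    moreover have "tconcat i (Suc j) (rderiv x (psym act i a)) (gact act x b) w
        = psym act i a (u' @ [x]) * gact act x b v'"
      using w' by (simp add: tconcat_def rderiv_def)
    ultimately show ?thesis unfolding S SA SB by (simp only: add.commute)
  qed
qed

lemma omega_tconcat_rderiv:
  assumes "homog a (Suc i)" "homog b (Suc j)"
  shows "rderiv x (omega act (Suc i + Suc j) (tconcat (Suc i) (Suc j) a b)) =
    (\<lambda>w. omega act (Suc i + j) (tconcat (Suc i) j a (rderiv x (psym act j b))) w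
        + omega act (Suc i + j) (tconcat i (Suc j) (rderiv x (psym act i a)) (gact act x b)) w)"
proof -
  have "homog (tconcat (Suc i) (Suc j) a b) (Suc (Suc i + j))"
    using homog_tconcat[of "Suc i" "Suc j"] by simp
  then have "rderiv x (omega act (Suc i + Suc j) (tconcat (Suc i) (Suc j) a b))
      = omega act (Suc i + j) (rderiv x (psym act (Suc i + j) (tconcat (Suc i) (Suc j) a b)))"
    using rderiv_omega_Suc[where n = "Suc i + j" and x = x and act = act] by simp
  then show ?thesis unfolding psym_tconcat_rderiv[OF assms] linop_add[OF linop_omega] .
qed

section \<open>The action of G and the product of B(V)\<close>

definition yd_cocycle :: "('g::group_add \<Rightarrow> 'g \<Rightarrow> 'k::field) \<Rightarrow> 'g set \<Rightarrow> bool" where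
  "yd_cocycle act S \<longleftrightarrow> (\<forall>g h. \<forall>s\<in>S. act (g + h) s = act g (h + s - h) * act h s)"

lemma yd_cocycle_braid_coeff:
  assumes "yd_cocycle act S" "conjg g t \<in> S" "t = conjg b a"
  shows "act b t * act g (conjg g t) = act g (conjg g a) * act (conjg g b) (conjg g t)"
proof -
  have "act (b + g) (conjg g t) = act b (g + conjg g t - g) * act g (conjg g t)"
    and "act (g + conjg g b) (conjg g t)
      = act g (conjg g b + conjg g t - conjg g b) * act (conjg g b) (conjg g t)"
    using assms(1,2) unfolding yd_cocycle_def by blast+
  moreover have "conjg g b + conjg g t - conjg g b = conjg g a"
    using assms(3) by (simp add: conjg_conj conjg_inverse)
  ultimately show ?thesis by (simp add: conjg_inverse add_conjg)
qed

lemma braid_gact: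
  assumes "yd_cocycle act S" "supp_in S F"
  shows "braid act i (gact act g F) = gact act g (braid act i F)"
proof (rule ext)
  fix w
  show "braid act i (gact act g F) w = gact act g (braid act i F) w"
  proof (cases "Suc i < length w")
    case False
    then show ?thesis by (simp add: braid_short gact_def)
  next
    case True
    then obtain p a b q where w: "w = p @ a # b # q" "length p = i" by (rule split_at_pair)
    let ?t = "conjg b a" and ?w' = "map (conjg g) (p @ b # conjg b a # q)"
    have L: "braid act i (gact act g F) w = act b ?t * (gcoeff act g (p @ b # ?t # q) * F ?w')"
      using w by (simp add: braid_split gact_def)
    have R: "gact act g (braid act i F) w
        = gcoeff act g (p @ a # b # q) * (act (conjg g b) (conjg g ?t) * F ?w')"
      using w by (simp add: braid_split gact_def conjg_conjg)
    show ?thesis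
    proof (cases "F ?w' = 0")
      case False
      then have "conjg g ?t \<in> S" using supportedD[OF assms(2)] by fastforce
      then have "act b ?t * act g (conjg g ?t) = act g (conjg g a) * act (conjg g b) (conjg g ?t)"
        by (rule yd_cocycle_braid_coeff[OF assms(1)]) simp
      then have "act b ?t * gcoeff act g (p @ b # ?t # q)
          = gcoeff act g (p @ a # b # q) * act (conjg g b) (conjg g ?t)"
        by (simp add: gcoeff_append gcoeff_Cons mult_ac)
      then show ?thesis using L R by (simp add: mult_ac)
    qed (simp add: L R)
  qed
qed

lemma psym_gact:
  assumes "conj_closed S" "yd_cocycle act S" "supp_in S F"
  shows "psym act m (gact act g F) = gact act g (psym act m F)"
proof -
  have "chain act k m (gact act g F) = gact act g (chain act k m F)" for k
    by (rule chain_commute[where P = "supp_in S", symmetric])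
      (use assms in \<open>simp_all add: supported_braid swap_stable_letters braid_gact\<close>)
  then show ?thesis by (simp add: psym_def gact_def fun_eq_iff sum_distrib_left)
qed

lemma omega_gact:
  "conj_closed S \<Longrightarrow> yd_cocycle act S \<Longrightarrow> supp_in S F \<Longrightarrow>
   omega act m (gact act g F) = gact act g (omega act m F)"
  by (induction m arbitrary: F) (simp_all add: omega_Suc psym_gact supp_in_psym)

lemma omega_tconcat_0l: "homog b j \<Longrightarrow> omega act j (tconcat 0 j a b) = (\<lambda>w. a [] * omega act j b w)"
  by (simp add: tconcat_0l omega_smult)

lemma omega_tconcat_0r: "homog a i \<Longrightarrow> omega act i (tconcat i 0 a b) = (\<lambda>w. b [] * omega act i a w)"
  by (simp add: tconcat_0r omega_smult)

text \<open>The product of the Nichols algebra is well defined: it does not depend on the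
  representatives of the factors.\<close>

lemma omega_tconcat_eq_0:
  assumes S: "conj_closed S" "yd_cocycle act S"
  shows "homog a i \<Longrightarrow> supp_in S a \<Longrightarrow> homog b j \<Longrightarrow> supp_in S b \<Longrightarrow>
    omega act i a = (\<lambda>_. 0) \<or> omega act j b = (\<lambda>_. 0) \<Longrightarrow>
    omega act (i + j) (tconcat i j a b) = (\<lambda>_. 0)"
proof (induction "i + j" arbitrary: i j a b rule: less_induct)
  case less
  consider (i0) "i = 0" | (j0) "j = 0" | (ss) i' j' where "i = Suc i'" "j = Suc j'"
    by (metis not0_implies_Suc)
  then show ?case
  proof cases
    case i0
    then show ?thesis using less.prems by (auto simp: omega_tconcat_0l fun_eq_iff)
  next
    case j0
    then show ?thesis using less.prems by (auto simp: omega_tconcat_0r fun_eq_iff)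
  next
    case ss
    have a: "homog a (Suc i')" and b: "homog b (Suc j')" using less.prems ss by simp_all
    show ?thesis
    proof (rule zero_by_rderiv)
      show "homog (omega act (i + j) (tconcat i j a b)) (Suc (Suc i' + j'))"
        using homog_omega[OF homog_tconcat] ss by (metis add_Suc_right)
      fix x
      let ?b1 = "rderiv x (psym act j' b)" and ?a1 = "rderiv x (psym act i' a)"
      have "omega act j' ?b1 = rderiv x (omega act (Suc j') b)"
        and "omega act i' ?a1 = rderiv x (omega act (Suc i') a)"
        and "omega act (Suc j') (gact act x b) = gact act x (omega act (Suc j') b)"
        using rderiv_omega_Suc[OF a] rderiv_omega_Suc[OF b] omega_gact[OF S] less.prems by simp_all
      then have z: "omega act (Suc i') a = (\<lambda>_. 0) \<or> omega act j' ?b1 = (\<lambda>_. 0)"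
        "omega act i' ?a1 = (\<lambda>_. 0) \<or> omega act (Suc j') (gact act x b) = (\<lambda>_. 0)"
        using less.prems(5) ss by (auto simp: rderiv_def gact_def)
      have "omega act (Suc i' + j') (tconcat (Suc i') j' a ?b1) = (\<lambda>_. 0)"
        using less.hyps[OF _ a _ homog_rderiv[OF homog_psym[OF b]] _ z(1)] less.prems ss
        by (simp add: supp_in_rderiv supp_in_psym S)
      moreover have "omega act (i' + Suc j') (tconcat i' (Suc j') ?a1 (gact act x b)) = (\<lambda>_. 0)"
        using less.hyps[OF _ homog_rderiv[OF homog_psym[OF a]] _ homog_gact[OF b] _ z(2)]
          less.prems ss
        by (simp add: supp_in_rderiv supp_in_psym supp_in_gact S)
      ultimately show "rderiv x (omega act (i + j) (tconcat i j a b)) = (\<lambda>_. 0)"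
        using omega_tconcat_rderiv[OF a b, of x act] ss by simp
    qed
  qed
qed

section \<open>Left derivatives\<close>

lemma homog_ebasis: "homog (ebasis w) (length w)"
  unfolding supported_def ebasis_def by auto

lemma rderiv_lderiv: "rderiv x (lderiv y F) = lderiv y (rderiv x F)"
  by (simp add: rderiv_def lderiv_def)

lemma lderiv_add: "lderiv y (\<lambda>w. F w + G w) = (\<lambda>v. lderiv y F v + lderiv y G v)"
  by (simp add: lderiv_def)

lemma lderiv_smult: "lderiv y (\<lambda>w. c * F w) = (\<lambda>v. c * lderiv y F v)"
  by (simp add: lderiv_def)

lemma rderiv_add: "rderiv x (\<lambda>w. F w + G w) = (\<lambda>v. rderiv x F v + rderiv x G v)"
  by (simp add: rderiv_def)

lemma rderiv_smult: "rderiv x (\<lambda>w. c * F w) = (\<lambda>v. c * rderiv x F v)"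
  by (simp add: rderiv_def)

lemma lderiv_gact:
  "lderiv y (gact act g F) = (\<lambda>v. act g (conjg g y) * gact act g (lderiv (conjg g y) F) v)"
  by (simp add: lderiv_def gact_def gcoeff_Cons fun_eq_iff)

lemma rderiv_omega_letter_tconcat:
  assumes "homog b (Suc j)"
  shows "rderiv x (omega act (Suc (Suc j)) (tconcat (Suc 0) (Suc j) (ebasis [s]) b)) =
    (\<lambda>w. omega act (Suc j) (tconcat (Suc 0) j (ebasis [s]) (rderiv x (psym act j b))) w
       + (if x = s then 1 else 0) * omega act (Suc j) (gact act x b) w)"
proof -
  have "tconcat 0 (Suc j) (rderiv x (psym act 0 (ebasis [s]))) (gact act x b)
      = (\<lambda>w. (if x = s then 1 else 0) * gact act x b w)"
    using tconcat_0l[OF homog_gact[OF assms]] by (auto simp: psym_0 rderiv_def ebasis_def fun_eq_iff)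
  moreover have "homog (ebasis [s]) (Suc 0)" using homog_ebasis[of "[s]"] by simp
  note omega_tconcat_rderiv[OF this assms, where x = x and act = act]
  ultimately show ?thesis by (simp add: omega_smult)
qed

lemma lderiv_omega_letter_tconcat_1:
  assumes "homog b (Suc 0)" "\<And>z. lderiv z (omega act (Suc 0) b) = omega act 0 (c z)"
  shows "lderiv y (omega act (Suc (Suc 0)) (tconcat (Suc 0) (Suc 0) (ebasis [s]) b)) =
    (\<lambda>v. (if y = s then 1 else 0) * omega act (Suc 0) b v
       + act s (conjg s y) * omega act (Suc 0) (tconcat (Suc 0) 0 (ebasis [s]) (c (conjg s y))) v)"
proof (rule ext)
  fix v :: "'a list"
  have c: "c z [] = b [z]" for z using assms(2)[of z] by (simp add: omega_1 lderiv_def fun_eq_iff)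
  let ?F = "tconcat (Suc 0) (Suc 0) (ebasis [s]) b"
  show "lderiv y (omega act (Suc (Suc 0)) ?F) v = (if y = s then 1 else 0) * omega act (Suc 0) b v
      + act s (conjg s y) * omega act (Suc 0) (tconcat (Suc 0) 0 (ebasis [s]) (c (conjg s y))) v"
  proof (cases "length v = 1")
    case True
    then obtain x where v: "v = [x]" by (metis One_nat_def length_0_conv length_Suc_conv)
    have "lderiv y (omega act (Suc (Suc 0)) ?F) v = psym act (Suc 0) ?F ([y] @ [x])"
      by (simp add: omega_2 lderiv_def v)
    also have "\<dots> = gcoeff act x [y] * ?F [x, conjg x y] + ?F [y, x]"
      by (subst psym_append_letter) (simp_all add: atMost_Suc)
    finally show ?thesis using c by (simp add: v omega_1 gcoeff_Cons tconcat_def ebasis_def)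
  next
    case False
    have "homog (omega act (Suc (Suc 0)) ?F) (Suc 0 + Suc 0)" by (rule homog_omega[OF homog_tconcat])
    then show ?thesis
      using False assms(1) supported_zero[of _ "omega act (Suc (Suc 0)) ?F" "y # v"]
        supported_zero[of _ b v]
      by (simp add: lderiv_def omega_1 tconcat_def)
  qed
qed

text \<open>Since an element of positive degree is determined by its right derivatives
  (\<open>eq_by_rderiv\<close>), the formula is proved by comparing right derivatives, using the Leibniz rule
  and induction on the degree.\<close>

lemma lderiv_omega_letter_tconcat:
  assumes S: "conj_closed S" "yd_cocycle act S"
  shows "homog b (Suc m) \<Longrightarrow> supp_in S b \<Longrightarrow>
    (\<And>z. homog (c z) m \<and> supp_in S (c z) \<and> lderiv z (omega act (Suc m) b) = omega act m (c z)) \<Longrightarrow>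
    lderiv y (omega act (Suc (Suc m)) (tconcat (Suc 0) (Suc m) (ebasis [s]) b)) =
    (\<lambda>v. (if y = s then 1 else 0) * omega act (Suc m) b v
       + act s (conjg s y) * omega act (Suc m) (tconcat (Suc 0) m (ebasis [s]) (c (conjg s y))) v)"
proof (induction m arbitrary: b c y)
  case 0
  then show ?case using lderiv_omega_letter_tconcat_1 by blast
next
  case (Suc m)
  let ?z = "conjg s y"
  let ?d = "\<lambda>a b. if a = b then 1 else (0::'b)"
  let ?L = "lderiv y (omega act (Suc (Suc (Suc m))) (tconcat (Suc 0) (Suc (Suc m)) (ebasis [s]) b))"
  let ?R = "\<lambda>v. ?d y s * omega act (Suc (Suc m)) b v
      + act s ?z * omega act (Suc (Suc m)) (tconcat (Suc 0) (Suc m) (ebasis [s]) (c ?z)) v"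
  have c: "homog (c z) (Suc m)" "supp_in S (c z)"
    "lderiv z (omega act (Suc (Suc m)) b) = omega act (Suc m) (c z)" for z
    using Suc.prems(3) by blast+
  show "?L = ?R"
  proof (rule eq_by_rderiv[where n = "Suc m"])
    have "homog (omega act (Suc (Suc (Suc m))) (tconcat (Suc 0) (Suc (Suc m)) (ebasis [s]) b))
        (Suc (Suc (Suc m)))"
      using homog_omega[OF homog_tconcat[of "Suc 0" "Suc (Suc m)"]] by simp
    then show "homog ?L (Suc (Suc m))" by (rule homog_lderiv)
    show "homog ?R (Suc (Suc m))"
      using Suc.prems(1) by (intro supported_add supported_smult homog_omega)
        (simp_all add: homog_tconcat[of "Suc 0" "Suc m", simplified])
    fix x
    let ?b1 = "rderiv x (psym act (Suc m) b)" and ?c1 = "\<lambda>z. rderiv x (psym act m (c z))"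
    have b1: "omega act (Suc m) ?b1 = rderiv x (omega act (Suc (Suc m)) b)"
      using rderiv_omega_Suc[OF Suc.prems(1)] by simp
    have "homog (?c1 z) m \<and> supp_in S (?c1 z) \<and> lderiv z (omega act (Suc m) ?b1) = omega act m (?c1 z)" for z
      using c[of z] by (simp add: b1 rderiv_lderiv[symmetric] rderiv_omega_Suc homog_rderiv homog_psym
          supp_in_rderiv supp_in_psym S)
    then have IH: "lderiv y (omega act (Suc (Suc m)) (tconcat (Suc 0) (Suc m) (ebasis [s]) ?b1)) =
        (\<lambda>v. ?d y s * omega act (Suc m) ?b1 v
           + act s ?z * omega act (Suc m) (tconcat (Suc 0) m (ebasis [s]) (?c1 ?z)) v)"
      using Suc.prems(1,2) by (intro Suc.IH)
        (simp_all add: homog_rderiv homog_psym supp_in_rderiv supp_in_psym S)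
    have g: "lderiv y (omega act (Suc (Suc m)) (gact act x b))
        = (\<lambda>v. act x (conjg x y) * omega act (Suc m) (gact act x (c (conjg x y))) v)"
      using c Suc.prems(2) by (simp add: omega_gact[OF S] lderiv_gact)
    have "rderiv x ?L = (\<lambda>v. ?d y s * omega act (Suc m) ?b1 v
        + act s ?z * omega act (Suc m) (tconcat (Suc 0) m (ebasis [s]) (?c1 ?z)) v
        + ?d x s * (act x (conjg x y) * omega act (Suc m) (gact act x (c (conjg x y))) v))"
      unfolding rderiv_lderiv rderiv_omega_letter_tconcat[OF Suc.prems(1)] lderiv_add lderiv_smult IH g
      by simp
    moreover have "rderiv x ?R = (\<lambda>v. ?d y s * omega act (Suc m) ?b1 v
        + act s ?z * (omega act (Suc m) (tconcat (Suc 0) m (ebasis [s]) (?c1 ?z)) v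
        + ?d x s * omega act (Suc m) (gact act x (c ?z)) v))"
      unfolding rderiv_add rderiv_smult rderiv_omega_letter_tconcat[OF c(1)] b1 by simp
    ultimately show "rderiv x ?L = rderiv x ?R"
      by (cases "x = s") (simp_all add: algebra_simps)
  qed
qed

section \<open>The Nichols algebra as the image of the symmetrizers\<close>

lemma vsubspace_zero: "vsubspace A \<Longrightarrow> (\<lambda>_. 0) \<in> A"
  unfolding vsubspace_def by blast

lemma vsubspace_add: "vsubspace A \<Longrightarrow> x \<in> A \<Longrightarrow> y \<in> A \<Longrightarrow> (\<lambda>u. x u + y u) \<in> A"
  unfolding vsubspace_def by blast

lemma vsubspace_smult: "vsubspace A \<Longrightarrow> x \<in> A \<Longrightarrow> (\<lambda>u. c * x u) \<in> A"
  unfolding vsubspace_def by blast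

lemma vsubspace_diff: "vsubspace A \<Longrightarrow> x \<in> A \<Longrightarrow> y \<in> A \<Longrightarrow> (\<lambda>u. x u - y u) \<in> A"
  using vsubspace_add[of A x "\<lambda>u. (-1) * y u"] vsubspace_smult[of A y "-1"] by simp

lemma vsubspace_sum:
  assumes "vsubspace A" "finite I" "\<And>i. i \<in> I \<Longrightarrow> f i \<in> A"
  shows "(\<lambda>u. \<Sum>i\<in>I. f i u) \<in> A"
  using assms(2,3)
  by induction (simp_all add: vsubspace_zero[OF assms(1)] vsubspace_add[OF assms(1)])

lemma vsubspace_sum_list:
  assumes "vsubspace A" "\<And>p. p \<in> set ps \<Longrightarrow> f p \<in> A"
  shows "(\<lambda>u. sum_list (map (\<lambda>p. f p u) ps)) \<in> A"
  using assms(2)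
  by (induction ps) (simp_all add: vsubspace_zero[OF assms(1)] vsubspace_add[OF assms(1)])

definition BV :: "('g::group_add \<Rightarrow> 'g \<Rightarrow> 'k::field) \<Rightarrow> 'g set \<Rightarrow> nat \<Rightarrow> ('g,'k) tvec set" where
  "BV act S n = {omega act n F | F. homog F n \<and> supp_in S F}"

lemma BV_I: "homog F n \<Longrightarrow> supp_in S F \<Longrightarrow> omega act n F \<in> BV act S n"
  unfolding BV_def by blast

lemma BV_E:
  "f \<in> BV act S n \<Longrightarrow> (\<And>F. f = omega act n F \<Longrightarrow> homog F n \<Longrightarrow> supp_in S F \<Longrightarrow> P) \<Longrightarrow> P"
  unfolding BV_def by blast

lemma vsubspace_BV: "vsubspace (BV act S n)"
  unfolding vsubspace_def
proof (intro conjI ballI allI)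
  show "(\<lambda>_. 0) \<in> BV act S n"
    using BV_I[where F = "\<lambda>_. 0" and n = n and S = S and act = act]
    by (simp add: supported_def omega_zero)
next
  fix f g assume "f \<in> BV act S n" "g \<in> BV act S n"
  then obtain F G where FG: "f = omega act n F" "homog F n" "supp_in S F"
    "g = omega act n G" "homog G n" "supp_in S G"
    by (metis BV_E)
  then have "omega act n (\<lambda>w. F w + G w) \<in> BV act S n" by (intro BV_I supported_add)
  then show "(\<lambda>u. f u + g u) \<in> BV act S n" by (simp add: FG linop_add[OF linop_omega])
next
  fix c f assume "f \<in> BV act S n"
  then obtain F where F: "f = omega act n F" "homog F n" "supp_in S F" by (rule BV_E)
  then have "omega act n (\<lambda>w. c * F w) \<in> BV act S n" by (intro BV_I supported_smult)
  then show "(\<lambda>u. c * f u) \<in> BV act S n" by (simp add: F omega_smult)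
qed

lemma homog_BV: "f \<in> BV act S n \<Longrightarrow> homog f n"
  by (erule BV_E) (simp add: homog_omega)

lemma supp_in_BV: "conj_closed S \<Longrightarrow> f \<in> BV act S n \<Longrightarrow> supp_in S f"
  by (erule BV_E) (simp add: supp_in_omega)

lemma supp_in_mono: "supp_in S F \<Longrightarrow> S \<subseteq> T \<Longrightarrow> supp_in T F"
  by (erule supported_mono) blast

lemma BV_mono: "S \<subseteq> T \<Longrightarrow> BV act S n \<subseteq> BV act T n"
  unfolding BV_def using supp_in_mono by blast

lemma rderiv_BV:
  assumes "conj_closed S" "F \<in> BV act S (Suc n)"
  shows "rderiv x F \<in> BV act S n"
proof -
  obtain G where "F = omega act (Suc n) G" "homog G (Suc n)" "supp_in S G"
    using assms(2) by (rule BV_E)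
  then show ?thesis
    using BV_I[OF homog_rderiv[OF homog_psym] supp_in_rderiv[OF supp_in_psym[OF assms(1)]]]
    by (simp add: rderiv_omega_Suc)
qed

lemma first_letter_decomp:
  assumes "finite S" "homog G (Suc n)" "supp_in S G"
  shows "G = (\<lambda>w. \<Sum>s\<in>S. tconcat (Suc 0) n (ebasis [s]) (lderiv s G) w)"
proof (rule ext)
  fix w
  show "G w = (\<Sum>s\<in>S. tconcat (Suc 0) n (ebasis [s]) (lderiv s G) w)"
  proof (cases w)
    case Nil
    then show ?thesis using supported_zero[OF assms(2), of w] by (simp add: tconcat_def)
  next
    case (Cons s' w')
    have t: "tconcat (Suc 0) n (ebasis [s]) (lderiv s G) (s' # w')
        = (if s = s' then G (s' # w') else 0)" for s
      using supported_zero[OF assms(2), of w] by (auto simp: tconcat_def ebasis_def lderiv_def Cons)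
    show ?thesis
      using supported_zero[OF assms(3), of w] by (auto simp: t assms(1) Cons)
  qed
qed

lemma lderiv_omega_letter_tconcat_BV:
  assumes S: "conj_closed S" "yd_cocycle act S" and s: "s \<in> S"
    and b: "homog b (Suc m)" "supp_in S b"
    and IH: "\<And>z. lderiv z (omega act (Suc m) b) \<in> BV act S m"
  shows "lderiv y (omega act (Suc (Suc m)) (tconcat (Suc 0) (Suc m) (ebasis [s]) b)) \<in> BV act S (Suc m)"
proof -
  have "\<forall>z. \<exists>c. homog c m \<and> supp_in S c \<and> lderiv z (omega act (Suc m) b) = omega act m c"
  proof
    fix z
    show "\<exists>c. homog c m \<and> supp_in S c \<and> lderiv z (omega act (Suc m) b) = omega act m c"
      using IH[of z] by (rule BV_E) blast
  qed
  then have "\<exists>c. \<forall>z. homog (c z) m \<and> supp_in S (c z) \<and> lderiv z (omega act (Suc m) b) = omega act m (c z)"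
    by (rule choice)
  then obtain c where c: "\<And>z. homog (c z) m \<and> supp_in S (c z) \<and> lderiv z (omega act (Suc m) b) = omega act m (c z)"
    by blast
  let ?e = "tconcat (Suc 0) m (ebasis [s]) (c (conjg s y))"
  let ?H = "\<lambda>v. (if y = s then 1 else 0) * b v + act s (conjg s y) * ?e v"
  have "homog ?H (Suc m)"
  proof (intro supported_add supported_smult)
    show "homog ?e (Suc m)" using homog_tconcat[of "Suc 0" m] by simp
  qed (rule b(1))
  moreover have "supp_in S ?H"
  proof (intro supported_add supported_smult)
    have "supp_in S (ebasis [s])" using s by (simp add: supported_def ebasis_def)
    then show "supp_in S ?e" using c by (intro supp_in_tconcat) blast+
  qed (rule b(2))
  ultimately have "omega act (Suc m) ?H \<in> BV act S (Suc m)" by (rule BV_I)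
  moreover have "omega act (Suc m) ?H
      = lderiv y (omega act (Suc (Suc m)) (tconcat (Suc 0) (Suc m) (ebasis [s]) b))"
    unfolding lderiv_omega_letter_tconcat[OF S b c] linop_add[OF linop_omega] omega_smult ..
  ultimately show ?thesis by simp
qed

lemma lderiv_BV:
  assumes S: "conj_closed S" "yd_cocycle act S" "finite S"
  shows "F \<in> BV act S (Suc n) \<Longrightarrow> lderiv y F \<in> BV act S n"
proof (induction n arbitrary: F y)
  case 0
  then obtain G where G: "F = omega act (Suc 0) G" "homog G (Suc 0)" by (rule BV_E)
  then have "lderiv y F = omega act 0 (\<lambda>v. G [y] * ebasis [] v)"
    using supported_zero[OF G(2)] by (auto simp: omega_1 lderiv_def ebasis_def fun_eq_iff)
  moreover have "omega act 0 (\<lambda>v. G [y] * ebasis [] v) \<in> BV act S 0"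
    by (rule BV_I) (simp_all add: supported_def ebasis_def)
  ultimately show ?case by simp
next
  case (Suc m)
  obtain G where G: "F = omega act (Suc (Suc m)) G" "homog G (Suc (Suc m))" "supp_in S G"
    using Suc.prems by (rule BV_E)
  let ?E = "\<lambda>s. tconcat (Suc 0) (Suc m) (ebasis [s]) (lderiv s G)"
  have "F = omega act (Suc (Suc m)) (\<lambda>w. \<Sum>s\<in>S. ?E s w)"
    unfolding G(1) by (rule arg_cong[OF first_letter_decomp[OF S(3) G(2,3)]])
  then have "lderiv y F = (\<lambda>v. \<Sum>s\<in>S. lderiv y (omega act (Suc (Suc m)) (?E s)) v)"
    by (simp add: linop_sum[OF linop_omega S(3)] lderiv_def)
  moreover have "lderiv y (omega act (Suc (Suc m)) (?E s)) \<in> BV act S (Suc m)" if "s \<in> S" for s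
  proof (rule lderiv_omega_letter_tconcat_BV[OF S(1,2) that])
    show "homog (lderiv s G) (Suc m)" by (rule homog_lderiv[OF G(2)])
    show "supp_in S (lderiv s G)" by (rule supp_in_lderiv[OF G(3)])
    then show "lderiv z (omega act (Suc m) (lderiv s G)) \<in> BV act S m" for z
      by (intro Suc.IH BV_I homog_lderiv[OF G(2)])
  qed
  ultimately show ?case by (simp add: vsubspace_sum[OF vsubspace_BV S(3)])
qed

lemma BV_suffix:
  "conj_closed S \<Longrightarrow> F \<in> BV act S (i + length v) \<Longrightarrow> (\<lambda>u. F (u @ v)) \<in> BV act S i"
proof (induction v arbitrary: F rule: rev_induct)
  case (snoc x v)
  then have "rderiv x F \<in> BV act S (i + length v)" by (simp add: rderiv_BV)
  then show ?case using snoc by (fastforce simp: rderiv_def)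
qed simp

lemma BV_prefix:
  "conj_closed S \<Longrightarrow> yd_cocycle act S \<Longrightarrow> finite S \<Longrightarrow> F \<in> BV act S (length u + j) \<Longrightarrow>
   (\<lambda>v. F (u @ v)) \<in> BV act S j"
proof (induction u arbitrary: F)
  case (Cons y u)
  then have "lderiv y F \<in> BV act S (length u + j)" by (simp add: lderiv_BV)
  then show ?case using Cons by (fastforce simp: lderiv_def)
qed simp

lemma BV_infix:
  "conj_closed S \<Longrightarrow> yd_cocycle act S \<Longrightarrow> finite S \<Longrightarrow> F \<in> BV act S (length u + m + length z) \<Longrightarrow>
   (\<lambda>v. F (u @ v @ z)) \<in> BV act S m"
  using BV_suffix[where F = F and i = "length u + m" and v = z]
    BV_prefix[where F = "\<lambda>v. F (v @ z)" and u = u and j = m]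
  by simp

definition words :: "'g set \<Rightarrow> nat \<Rightarrow> 'g list set" where
  "words S n = {w. length w = n \<and> set w \<subseteq> S}"

lemma finite_words: "finite S \<Longrightarrow> finite (words S n)"
  unfolding words_def using finite_lists_length_eq[of S n] by (simp add: conj_commute)

lemma vsubspace_lspan: "vsubspace (lspan X)"
  unfolding vsubspace_def
proof (intro conjI ballI allI)
  show "(\<lambda>_. 0) \<in> lspan X" unfolding lspan_def by (rule CollectI, rule exI[of _ "[]"]) simp
next
  fix x y assume "x \<in> lspan X" "y \<in> lspan X"
  then obtain ps qs where "set (map snd ps) \<subseteq> X" "x = (\<lambda>u. sum_list (map (\<lambda>(c, x). c * x u) ps))"
    "set (map snd qs) \<subseteq> X" "y = (\<lambda>u. sum_list (map (\<lambda>(c, x). c * x u) qs))"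
    unfolding lspan_def by blast
  then show "(\<lambda>u. x u + y u) \<in> lspan X" unfolding lspan_def
    by (intro CollectI exI[of _ "ps @ qs"]) auto
next
  fix a x assume "x \<in> lspan X"
  then obtain ps where ps: "set (map snd ps) \<subseteq> X"
    "x = (\<lambda>u. sum_list (map (\<lambda>(c, x). c * x u) ps))"
    unfolding lspan_def by blast
  let ?ps = "map (\<lambda>(c, x). (a * c, x)) ps"
  have "a * sum_list (map (\<lambda>(c, x). c * x u) ps) = sum_list (map (\<lambda>(c, x). c * x u) ?ps)" for u
    by (induction ps) (auto simp: algebra_simps)
  then show "(\<lambda>u. a * x u) \<in> lspan X"
    using ps unfolding lspan_def by (intro CollectI exI[of _ ?ps]) (auto simp: case_prod_beta)
qed

lemma lspan_base: "x \<in> X \<Longrightarrow> x \<in> lspan X"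
  unfolding lspan_def by (intro CollectI exI[of _ "[(1, x)]"]) auto

lemma lspan_minimal: assumes "vsubspace A" "X \<subseteq> A" shows "lspan X \<subseteq> A"
proof
  fix f assume "f \<in> lspan X"
  then obtain ps where ps: "set (map snd ps) \<subseteq> X" "f = (\<lambda>u. sum_list (map (\<lambda>(c, x). c * x u) ps))"
    unfolding lspan_def by blast
  have "(\<lambda>u. sum_list (map (\<lambda>p. (\<lambda>u. fst p * snd p u) u) ps)) \<in> A"
  proof (rule vsubspace_sum_list[OF assms(1)])
    fix p assume "p \<in> set ps"
    then have "snd p \<in> A" using ps(1) assms(2) by auto
    then show "(\<lambda>u. fst p * snd p u) \<in> A" by (rule vsubspace_smult[OF assms(1)])
  qed
  then show "f \<in> A" using ps(2) by (simp add: case_prod_unfold)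
qed

lemma tvec_basis_expansion:
  assumes "finite S" "homog F n" "supp_in S F"
  shows "F = (\<lambda>u. \<Sum>w\<in>words S n. F w * ebasis w u)"
proof (rule ext)
  fix u
  show "F u = (\<Sum>w\<in>words S n. F w * ebasis w u)"
  proof (cases "u \<in> words S n")
    case True
    have "(\<Sum>w\<in>words S n. F w * ebasis w u) = (\<Sum>w\<in>words S n. if w = u then F u else 0)"
      by (rule sum.cong) (auto simp: ebasis_def)
    also have "\<dots> = F u" using True finite_words[OF assms(1)] by simp
    finally show ?thesis by simp
  next
    case False
    then have "F u = 0" using assms(2,3) unfolding supported_def words_def by auto
    moreover have "(\<Sum>w\<in>words S n. F w * ebasis w u) = 0"
      by (rule sum.neutral) (use False in \<open>auto simp: ebasis_def\<close>)
    ultimately show ?thesis by simp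
  qed
qed

lemma BV_basis_expansion:
  assumes "finite S" "f \<in> BV act S n"
  obtains F where "f = (\<lambda>u. \<Sum>w\<in>words S n. F w * omega act n (ebasis w) u)"
proof -
  obtain F where f: "f = omega act n F" and sF: "homog F n" and lF: "supp_in S F" using assms(2) by (rule BV_E)
  have "f = omega act n (\<lambda>u. \<Sum>w\<in>words S n. F w * ebasis w u)" using tvec_basis_expansion[OF assms(1) sF lF] f by simp
  also have "\<dots> = (\<lambda>u. \<Sum>w\<in>words S n. omega act n (\<lambda>u. F w * ebasis w u) u)"
    by (rule linop_sum[OF linop_omega finite_words[OF assms(1)]])
  also have "\<dots> = (\<lambda>u. \<Sum>w\<in>words S n. F w * omega act n (ebasis w) u)" by (simp add: omega_smult)
  finally show ?thesis using that by blast
qed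

lemma BV_subset_vsubspace:
  assumes "finite S" "vsubspace K" "\<And>w. w \<in> words S n \<Longrightarrow> omega act n (ebasis w) \<in> K"
  shows "BV act S n \<subseteq> K"
proof
  fix f assume "f \<in> BV act S n"
  then obtain F where "f = (\<lambda>u. \<Sum>w\<in>words S n. F w * omega act n (ebasis w) u)"
    using BV_basis_expansion[OF assms(1)] by blast
  then show "f \<in> K"
    using assms by (simp add: vsubspace_sum vsubspace_smult finite_words)
qed

lemma lspan_eq_BV:
  assumes "finite S" "X \<subseteq> BV act S n" "\<And>w. w \<in> words S n \<Longrightarrow> omega act n (ebasis w) \<in> lspan X"
  shows "lspan X = BV act S n"
  using assms by (intro equalityI lspan_minimal[OF vsubspace_BV] BV_subset_vsubspace vsubspace_lspan)

lemma Nichols_eq_BV: "finite S \<Longrightarrow> Nichols act S n = BV act S n"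
  unfolding Nichols_def
  by (rule lspan_eq_BV) (auto intro!: BV_I lspan_base homog_ebasis[of _, unfolded]
      simp: words_def supported_def ebasis_def)

lemma prod_if_one_zero: "(\<Prod>k<(n::nat). if P k then (1::'k::field) else 0) = (if \<forall>k<n. P k then 1 else 0)"
  by (induction n) (auto simp: less_Suc_eq)

definition vecs_on :: "'g set \<Rightarrow> ('g \<Rightarrow> 'k::zero) set" where
  "vecs_on A = {w. \<forall>g. w g \<noteq> 0 \<longrightarrow> g \<in> A}"

definition unitv :: "'g \<Rightarrow> 'g \<Rightarrow> 'k::{zero,one}" where
  "unitv x = (\<lambda>g. if g = x then 1 else 0)"

lemma tens_unitv: "tens (map unitv w) = (ebasis w :: ('g,'k::field) tvec)"
proof (rule ext)
  fix u :: "'g list"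
  show "tens (map unitv w) u = ebasis w u"
  proof (cases "length u = length w")
    case True
    have "tens (map unitv w) u = (\<Prod>k<length w. (map unitv w ! k) (u ! k))" using True by (simp add: tens_def)
    also have "\<dots> = (\<Prod>k<length w. if u ! k = w ! k then 1 else 0)"
      by (rule prod.cong) (auto simp: unitv_def)
    also have "\<dots> = (if \<forall>k<length w. u ! k = w ! k then 1 else 0)"
      by (rule prod_if_one_zero)
    also have "\<dots> = ebasis w u" using True by (auto simp: ebasis_def list_eq_iff_nth_eq)
    finally show ?thesis .
  next
    case False
    then show ?thesis by (auto simp: tens_def ebasis_def)
  qed
qed

lemma supp_in_tens: assumes "set vs \<subseteq> vecs_on A" shows "supp_in A (tens vs :: ('g,'k::field) tvec)"
  unfolding supported_def
proof (intro allI impI)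
  fix u :: "'g list" assume nz: "tens vs u \<noteq> (0::'k)"
  then have l: "length u = length vs" by (auto simp: tens_def split: if_splits)
  have p: "(\<Prod>k<length vs. (vs ! k) (u ! k)) \<noteq> (0::'k)" using nz l by (simp add: tens_def)
  show "set u \<subseteq> A" unfolding subset_code(1) all_set_conv_all_nth
  proof (intro allI impI)
    fix k assume k: "k < length u"
    then have "(vs ! k) (u ! k) \<noteq> 0" using p l by (metis finite_lessThan lessThan_iff prod_zero)
    moreover have "vs ! k \<in> vecs_on A" using assms k l by (metis nth_mem subsetD)
    ultimately show "u ! k \<in> A" unfolding vecs_on_def by blast
  qed
qed

lemma homog_tens: "homog (tens vs) (length vs)"
  unfolding supported_def tens_def by auto

lemma genW_vecs_on: "finite A \<Longrightarrow> genW act (vecs_on A) n = BV act A n"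
  unfolding genW_def
proof (rule lspan_eq_BV)
  show "{omega act n (tens vs) | vs. length vs = n \<and> set vs \<subseteq> vecs_on A} \<subseteq> BV act A n"
    using BV_I homog_tens supp_in_tens by blast
  fix w assume "w \<in> words A n"
  then have "length (map unitv w) = n" "set (map unitv w) \<subseteq> vecs_on A"
    by (auto simp: words_def vecs_on_def unitv_def split: if_splits)
  then show "omega act n (ebasis w) \<in> lspan {omega act n (tens vs) | vs. length vs = n \<and> set vs \<subseteq> vecs_on A}"
    unfolding tens_unitv[symmetric] by (intro lspan_base) blast
qed

lemma tspan_add_rank_one:
  assumes "H \<in> tspan C D" "c \<in> C" "d \<in> D"
  shows "(\<lambda>(u, v). H (u, v) + c u * d v) \<in> tspan C D"
proof -
  obtain ps where "set ps \<subseteq> C \<times> D" "H = (\<lambda>(u, v). sum_list (map (\<lambda>(a, b). a u * b v) ps))"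
    using assms(1) unfolding tspan_def by blast
  then show ?thesis
    using assms(2,3) unfolding tspan_def by (intro CollectI exI[of _ "(c, d) # ps"]) (auto simp: add.commute)
qed

text \<open>Gaussian elimination: subtracting the rank-one function built from a nonzero entry kills
  its row, keeps all columns in C and all rows in D.\<close>

lemma tspan_of_slices:
  fixes H :: "'a \<times> 'b \<Rightarrow> 'k::field"
  assumes C: "vsubspace C" and D: "vsubspace D" and X: "finite X"
  shows "(\<forall>u v. H (u, v) \<noteq> 0 \<longrightarrow> u \<in> X) \<Longrightarrow> (\<forall>v. (\<lambda>u. H (u, v)) \<in> C) \<Longrightarrow>
    (\<forall>u. (\<lambda>v. H (u, v)) \<in> D) \<Longrightarrow> H \<in> tspan C D"
proof (induction "card {u\<in>X. \<exists>v. H (u, v) \<noteq> 0}" arbitrary: H rule: less_induct)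
  case less
  show ?case
  proof (cases "\<forall>u v. H (u, v) = 0")
    case True
    then have "H = (\<lambda>(u, v). sum_list (map (\<lambda>(a, c). a u * c v) []))" by (auto simp: fun_eq_iff)
    then show ?thesis unfolding tspan_def by (intro CollectI exI[of _ "[]"]) simp
  next
    case False
    then obtain u0 v0 where nz: "H (u0, v0) \<noteq> 0" by blast
    define c0 where "c0 = (\<lambda>u. H (u, v0))"
    define d0 where "d0 = (\<lambda>v. inverse (H (u0, v0)) * H (u0, v))"
    define H' where "H' = (\<lambda>(u, v). H (u, v) - c0 u * d0 v)"
    have c0: "c0 \<in> C" using less.prems(2) by (simp add: c0_def)
    have d0: "d0 \<in> D" unfolding d0_def using less.prems(3) vsubspace_smult[OF D] by blast
    have "{u\<in>X. \<exists>v. H' (u, v) \<noteq> 0} \<subseteq> {u\<in>X. \<exists>v. H (u, v) \<noteq> 0} - {u0}"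
    proof
      fix u assume "u \<in> {u\<in>X. \<exists>v. H' (u, v) \<noteq> 0}"
      then obtain v where "u \<in> X" "H' (u, v) \<noteq> 0" by blast
      moreover have "H' (u0, v) = 0" using nz by (simp add: H'_def c0_def d0_def)
      ultimately show "u \<in> {u\<in>X. \<exists>v. H (u, v) \<noteq> 0} - {u0}"
        by (auto simp: H'_def c0_def) (metis mult_zero_left)
    qed
    moreover have "u0 \<in> {u\<in>X. \<exists>v. H (u, v) \<noteq> 0}" using nz less.prems(1) by blast
    ultimately have "{u\<in>X. \<exists>v. H' (u, v) \<noteq> 0} \<subset> {u\<in>X. \<exists>v. H (u, v) \<noteq> 0}" by blast
    then have "card {u\<in>X. \<exists>v. H' (u, v) \<noteq> 0} < card {u\<in>X. \<exists>v. H (u, v) \<noteq> 0}"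
      using X by (simp add: psubset_card_mono)
    moreover have "\<forall>u v. H' (u, v) \<noteq> 0 \<longrightarrow> u \<in> X"
      using less.prems(1) by (auto simp: H'_def c0_def) (metis mult_zero_left)
    moreover have "\<forall>v. (\<lambda>u. H' (u, v)) \<in> C"
    proof
      fix v
      have "(\<lambda>u. H (u, v) - d0 v * c0 u) \<in> C"
        using less.prems(2) vsubspace_diff[OF C _ vsubspace_smult[OF C c0]] by blast
      then show "(\<lambda>u. H' (u, v)) \<in> C" by (simp add: H'_def mult.commute)
    qed
    moreover have "\<forall>u. (\<lambda>v. H' (u, v)) \<in> D"
      using less.prems(3) vsubspace_diff[OF D _ vsubspace_smult[OF D d0]] by (simp add: H'_def)
    ultimately have "H' \<in> tspan C D" by (rule less.hyps)
    from tspan_add_rank_one[OF this c0 d0] show ?thesis by (simp add: H'_def case_prod_beta')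
  qed
qed

section \<open>The largest graded left coideal subalgebra with given degree-one part\<close>

text \<open>The largest \<open>\<nat>\<^sub>0\<close>-graded left coideal subalgebra of B(V) whose degree-one part is
  spanned by the letters in A (see \<open>graded_lcs_Kmax\<close> and \<open>graded_lcs_sub_Kmax\<close>).\<close>

definition Kmax :: "('g::group_add \<Rightarrow> 'g \<Rightarrow> 'k::field) \<Rightarrow> 'g set \<Rightarrow> 'g set \<Rightarrow> nat \<Rightarrow> ('g,'k) tvec set" where
  "Kmax act S A n = {f \<in> BV act S n. \<forall>u x. x \<notin> A \<longrightarrow> f (u @ [x]) = 0}"

lemma vsubspace_Kmax: "vsubspace (Kmax act S A n)"
  unfolding vsubspace_def Kmax_def
  by (simp add: vsubspace_zero[OF vsubspace_BV] vsubspace_add[OF vsubspace_BV]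
      vsubspace_smult[OF vsubspace_BV])

lemma Tsp_iff: "f \<in> Tsp S n \<longleftrightarrow> homog f n \<and> supp_in S f"
  unfolding Tsp_def supported_def by blast

lemma tens_single:
  assumes "homog f (Suc 0)"
  shows "f = tens [\<lambda>g. f [g]]"
proof (rule ext)
  fix u
  show "f u = tens [\<lambda>g. f [g]] u"
  proof (cases "length u = Suc 0")
    case True
    then obtain g where "u = [g]" by (cases u) auto
    then show ?thesis by (simp add: tens_def)
  qed (use supported_zero[OF assms] in \<open>simp add: tens_def\<close>)
qed

lemma Kmax_1:
  fixes act :: "'g::group_add \<Rightarrow> 'g \<Rightarrow> 'k::field"
  assumes "A \<subseteq> S"
  shows "Kmax act S A (Suc 0) = (\<lambda>v. tens [v]) ` vecs_on A"
proof
  show "Kmax act S A (Suc 0) \<subseteq> (\<lambda>v. tens [v]) ` vecs_on A"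
  proof
    fix f assume f: "f \<in> Kmax act S A (Suc 0)"
    then have "f \<in> BV act S (Suc 0)" by (simp add: Kmax_def)
    then have "f = tens [\<lambda>g. f [g]]" by (rule tens_single[OF homog_BV])
    moreover have "\<forall>u x. x \<notin> A \<longrightarrow> f (u @ [x]) = 0" using f by (simp add: Kmax_def)
    then have "f ([] @ [g]) = 0" if "g \<notin> A" for g using that by blast
    then have "(\<lambda>g. f [g]) \<in> vecs_on A" unfolding vecs_on_def by auto
    ultimately show "f \<in> (\<lambda>v. tens [v]) ` vecs_on A" by blast
  qed
  show "(\<lambda>v. tens [v]) ` vecs_on A \<subseteq> Kmax act S A (Suc 0)"
  proof
    fix f :: "('g,'k) tvec" assume "f \<in> (\<lambda>v. tens [v]) ` vecs_on A"
    then obtain v where v: "v \<in> vecs_on A" "f = tens [v]" by blast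
    have "homog (tens [v]) (Suc 0)" using homog_tens[of "[v]"] by simp
    moreover have "supp_in S (tens [v])" using supp_in_tens[of "[v]" A] v(1) assms by (auto elim: supp_in_mono)
    ultimately have "omega act (Suc 0) (tens [v]) \<in> BV act S (Suc 0)" by (rule BV_I)
    then have "f \<in> BV act S (Suc 0)" using v(2) by (simp add: omega_1)
    moreover have "f (u @ [x]) = 0" if "x \<notin> A" for u x
      using v that by (cases u) (auto simp: tens_def vecs_on_def)
    ultimately show "f \<in> Kmax act S A (Suc 0)" unfolding Kmax_def by blast
  qed
qed

lemma graded_lcs_sub_Kmax:
  assumes S: "finite S" and K: "graded_lcs act S K" "K 1 = (\<lambda>v. tens [v]) ` vecs_on A"
  shows "K n \<subseteq> Kmax act S A n"
proof
  fix f assume f: "f \<in> K n"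
  then have fB: "f \<in> BV act S n" using K(1) Nichols_eq_BV[OF S] unfolding graded_lcs_def by blast
  have "f (u @ [x]) = 0" if x: "x \<notin> A" and u: "length u + 1 = n" for u x
  proof -
    have "deconc (length u) 1 f \<in> tspan (Nichols act S (length u)) (K 1)"
      using K(1) f u unfolding graded_lcs_def by blast
    then obtain ps where ps: "set ps \<subseteq> Nichols act S (length u) \<times> K 1"
      "deconc (length u) 1 f = (\<lambda>(u, v). sum_list (map (\<lambda>(a, c). a u * c v) ps))"
      unfolding tspan_def by blast
    have "c [x] = 0" if "(a, c) \<in> set ps" for a c
    proof -
      have "c \<in> K 1" using that ps(1) by auto
      then obtain v where "v \<in> vecs_on A" "c = tens [v]" using K(2) by auto
      then show ?thesis using x by (auto simp: tens_def vecs_on_def)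
    qed
    then have "map (\<lambda>(a, c). a u * c [x]) ps = map (\<lambda>_. 0) ps" by (intro map_cong) auto
    then have "sum_list (map (\<lambda>(a, c). a u * c [x]) ps) = 0" by (simp only: sum_list_0)
    then show ?thesis using fun_cong[OF ps(2), of "(u, [x])"] by (simp add: deconc_def)
  qed
  moreover have "f (u @ [x]) = 0" if "length u + 1 \<noteq> n" for u x
    using supported_zero[OF homog_BV[OF fB]] that by simp
  ultimately show "f \<in> Kmax act S A n" unfolding Kmax_def using fB by blast
qed

lemma ebasis_snoc: "ebasis (w @ [x]) = tconcat (length w) 1 (ebasis w) (ebasis [x])"
proof (rule ext)
  fix u :: "'a list"
  show "ebasis (w @ [x]) u = (tconcat (length w) 1 (ebasis w) (ebasis [x]) :: ('a, 'b) tvec) u"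
  proof (cases "length u = Suc (length w)")
    case True
    have "(w @ [x] = u) = (w = take (length w) u \<and> [x] = drop (length w) u)"
      by (rule append_eq_conv_conj)
    then show ?thesis using True by (auto simp: ebasis_def tconcat_def)
  next
    case False
    then have "u \<noteq> w @ [x]" by auto
    then show ?thesis using False by (simp add: ebasis_def tconcat_def)
  qed
qed

lemma BV_sub_graded_lcs:
  assumes A: "finite A" "A \<subseteq> S" and K: "graded_lcs act S K" "K 1 = (\<lambda>v. tens [v]) ` vecs_on A"
  shows "BV act A n \<subseteq> K n"
proof (rule BV_subset_vsubspace[OF A(1)])
  show "vsubspace (K n)" using K(1) unfolding graded_lcs_def by blast
  have "omega act (length w) (ebasis w) \<in> K (length w)" if "set w \<subseteq> A" for w
    using that
  proof (induction w rule: rev_induct)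
    case Nil
    then show ?case using K(1) unfolding graded_lcs_def by simp
  next
    case (snoc x w)
    have "unitv x \<in> vecs_on A" using snoc.prems by (simp add: vecs_on_def unitv_def)
    then have "tens [unitv x] \<in> (\<lambda>v. tens [v]) ` vecs_on A" by (rule imageI)
    then have "tens [unitv x] \<in> K 1" using K(2) by simp
    then have "omega act 1 (ebasis [x]) \<in> K 1" by (simp add: omega_1 tens_unitv[of "[x]", simplified])
    moreover have "ebasis w \<in> Tsp S (length w)" "ebasis [x] \<in> Tsp S 1"
      using snoc.prems A(2) by (auto simp: Tsp_def ebasis_def)
    moreover have "omega act (length w) (ebasis w) \<in> K (length w)" using snoc by simp
    ultimately have "omega act (length w + 1) (tconcat (length w) 1 (ebasis w) (ebasis [x]))
        \<in> K (length w + 1)"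
      using K(1) unfolding graded_lcs_def by blast
    then show ?case by (simp add: ebasis_snoc)
  qed
  then show "omega act n (ebasis w) \<in> K n" if "w \<in> words A n" for w
    using that by (auto simp: words_def)
qed

lemma rderiv_omega_tconcat_eq_0:
  assumes S: "conj_closed S" "yd_cocycle act S"
    and a: "homog a i" "supp_in S a" and b: "homog b j" "supp_in S b"
    and za: "rderiv x (omega act i a) = (\<lambda>_. 0)" and zb: "rderiv x (omega act j b) = (\<lambda>_. 0)"
  shows "rderiv x (omega act (i + j) (tconcat i j a b)) = (\<lambda>_. 0)"
proof -
  consider (j0) "j = 0" | (i0) "i = 0" | (ss) i' j' where "i = Suc i'" "j = Suc j'"
    by (metis not0_implies_Suc)
  then show ?thesis
  proof cases
    case j0
    then show ?thesis using za by (simp add: omega_tconcat_0r[OF a(1)] rderiv_def fun_eq_iff)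
  next
    case i0
    then show ?thesis using zb by (simp add: omega_tconcat_0l[OF b(1)] rderiv_def fun_eq_iff)
  next
    case ss
    have a': "homog a (Suc i')" and b': "homog b (Suc j')" using a b ss by simp_all
    have "omega act j' (rderiv x (psym act j' b)) = (\<lambda>_. 0)"
      and "omega act i' (rderiv x (psym act i' a)) = (\<lambda>_. 0)"
      using rderiv_omega_Suc[OF b'] rderiv_omega_Suc[OF a'] za zb ss by simp_all
    then have "omega act (Suc i' + j') (tconcat (Suc i') j' a (rderiv x (psym act j' b))) = (\<lambda>_. 0)"
      and "omega act (i' + Suc j') (tconcat i' (Suc j') (rderiv x (psym act i' a)) (gact act x b))
        = (\<lambda>_. 0)"
      using omega_tconcat_eq_0[OF S a' a(2) homog_rderiv[OF homog_psym[OF b']]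
            supp_in_rderiv[OF supp_in_psym[OF S(1) b(2)]]]
          omega_tconcat_eq_0[OF S homog_rderiv[OF homog_psym[OF a']]
            supp_in_rderiv[OF supp_in_psym[OF S(1) a(2)]] homog_gact[OF b'] supp_in_gact[OF S(1) b(2)]]
      by blast+
    then show ?thesis using omega_tconcat_rderiv[OF a' b', of x act] ss by simp
  qed
qed

lemma Kmax_mult:
  assumes S: "conj_closed S" "yd_cocycle act S"
    and ab: "a \<in> Tsp S i" "b \<in> Tsp S j" "omega act i a \<in> Kmax act S A i" "omega act j b \<in> Kmax act S A j"
  shows "omega act (i + j) (tconcat i j a b) \<in> Kmax act S A (i + j)"
proof -
  have a: "homog a i" "supp_in S a" and b: "homog b j" "supp_in S b" using ab(1,2) Tsp_iff by blast+
  have "rderiv x (omega act (i + j) (tconcat i j a b)) = (\<lambda>_. 0)" if "x \<notin> A" for x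
    using that ab(3,4) by (intro rderiv_omega_tconcat_eq_0[OF S a b]) (auto simp: Kmax_def rderiv_def)
  then have "omega act (i + j) (tconcat i j a b) (u @ [x]) = 0" if "x \<notin> A" for u x
    using that by (simp add: rderiv_def fun_eq_iff)
  moreover have "omega act (i + j) (tconcat i j a b) \<in> BV act S (i + j)"
    by (rule BV_I[OF homog_tconcat supp_in_tconcat[OF a(2) b(2)]])
  ultimately show ?thesis unfolding Kmax_def by blast
qed

lemma deconc_Kmax:
  assumes S: "conj_closed S" "yd_cocycle act S" "finite S" and f: "f \<in> Kmax act S A (i + j)"
  shows "deconc i j f \<in> tspan (BV act S i) (Kmax act S A j)"
proof (rule tspan_of_slices[OF vsubspace_BV vsubspace_Kmax finite_words[OF S(3)]])
  have fB: "f \<in> BV act S (i + j)" using f unfolding Kmax_def by blast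
  show "\<forall>u v. deconc i j f (u, v) \<noteq> 0 \<longrightarrow> u \<in> words S i"
  proof (intro allI impI)
    fix u v assume "deconc i j f (u, v) \<noteq> 0"
    then have "length u = i" "f (u @ v) \<noteq> 0" by (auto simp: deconc_def split: if_splits)
    moreover have "set (u @ v) \<subseteq> S" by (rule supportedD[OF supp_in_BV[OF S(1) fB] \<open>f (u @ v) \<noteq> 0\<close>])
    ultimately show "u \<in> words S i" by (auto simp: words_def)
  qed
  show "\<forall>v. (\<lambda>u. deconc i j f (u, v)) \<in> BV act S i"
  proof
    fix v
    show "(\<lambda>u. deconc i j f (u, v)) \<in> BV act S i"
    proof (cases "length v = j")
      case True
      then have "(\<lambda>u. deconc i j f (u, v)) = (\<lambda>u. f (u @ v))"
        using supported_zero[OF homog_BV[OF fB]] by (auto simp: deconc_def fun_eq_iff)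
      then show ?thesis using BV_suffix[OF S(1), where F = f and i = i and v = v] fB True by simp
    qed (simp add: deconc_def vsubspace_zero[OF vsubspace_BV])
  qed
  show "\<forall>u. (\<lambda>v. deconc i j f (u, v)) \<in> Kmax act S A j"
  proof
    fix u
    show "(\<lambda>v. deconc i j f (u, v)) \<in> Kmax act S A j"
    proof (cases "length u = i")
      case True
      then have "(\<lambda>v. deconc i j f (u, v)) = (\<lambda>v. f (u @ v))"
        using supported_zero[OF homog_BV[OF fB]] by (auto simp: deconc_def fun_eq_iff)
      moreover have "(\<lambda>v. f (u @ v)) \<in> BV act S j" using BV_prefix[OF S] fB True by simp
      ultimately show ?thesis using f unfolding Kmax_def by (simp del: append_assoc add: append_assoc[symmetric])
    qed (simp add: deconc_def vsubspace_zero[OF vsubspace_Kmax])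
  qed
qed

lemma graded_lcs_Kmax:
  fixes act :: "'g::group_add \<Rightarrow> 'g \<Rightarrow> 'k::field"
  assumes S: "conj_closed S" "yd_cocycle act S" "finite S"
  shows "graded_lcs act S (Kmax act S A)"
  unfolding graded_lcs_def Nichols_eq_BV[OF S(3)]
proof (intro conjI allI impI)
  fix n
  show "vsubspace (Kmax act S A n)" by (rule vsubspace_Kmax)
  show "Kmax act S A n \<subseteq> BV act S n" by (auto simp: Kmax_def)
next
  have "homog (ebasis [] :: ('g,'k) tvec) 0" "supp_in S (ebasis [] :: ('g,'k) tvec)"
    by (auto simp: supported_def ebasis_def)
  then have "omega act 0 (ebasis []) \<in> BV act S 0" by (rule BV_I)
  then show "ebasis [] \<in> Kmax act S A 0" unfolding Kmax_def by (simp add: ebasis_def)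
next
  fix i j a b
  assume "a \<in> Tsp S i \<and> b \<in> Tsp S j \<and> omega act i a \<in> Kmax act S A i \<and> omega act j b \<in> Kmax act S A j"
  then show "omega act (i + j) (tconcat i j a b) \<in> Kmax act S A (i + j)"
    using Kmax_mult[OF S(1,2)] by blast
next
  fix i j f assume "f \<in> Kmax act S A (i + j)"
  then show "deconc i j f \<in> tspan (BV act S i) (Kmax act S A j)" by (rule deconc_Kmax[OF S])
qed

lemma unique_lcs_iff_Kmax_sub_BV:
  fixes act :: "'g::group_add \<Rightarrow> 'g \<Rightarrow> 'k::field"
  assumes S: "conj_closed S" "yd_cocycle act S" "finite S" and A: "A \<subseteq> S"
  shows "unique_lcs act S (vecs_on A) \<longleftrightarrow> (\<forall>n. Kmax act S A n \<subseteq> BV act A n)"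
proof -
  have finA: "finite A" by (rule finite_subset[OF A S(3)])
  have gen: "genW act (vecs_on A) = BV act A" using genW_vecs_on[OF finA] by blast
  have Kmax: "graded_lcs act S (Kmax act S A)" "Kmax act S A 1 = (\<lambda>v. tens [v]) ` vecs_on A"
    using graded_lcs_Kmax[OF S] Kmax_1[OF A] by simp_all
  have between: "BV act A n \<subseteq> K n \<and> K n \<subseteq> Kmax act S A n"
    if "graded_lcs act S K" "K 1 = (\<lambda>v. tens [v]) ` vecs_on A" for K n
    using BV_sub_graded_lcs[OF finA A that] graded_lcs_sub_Kmax[OF S(3) that] by blast
  show ?thesis
  proof
    assume "unique_lcs act S (vecs_on A)"
    then have "Kmax act S A = genW act (vecs_on A)"
      unfolding unique_lcs_def using Kmax by blast
    then show "\<forall>n. Kmax act S A n \<subseteq> BV act A n" by (simp add: gen)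
  next
    assume sub: "\<forall>n. Kmax act S A n \<subseteq> BV act A n"
    have eq: "K = BV act A" if "graded_lcs act S K" "K 1 = (\<lambda>v. tens [v]) ` vecs_on A" for K
    proof (rule ext)
      fix n
      show "K n = BV act A n" using between[OF that, of n] sub by blast
    qed
    show "unique_lcs act S (vecs_on A)"
      unfolding unique_lcs_def gen
    proof (intro conjI allI impI)
      show "graded_lcs act S (BV act A)" using Kmax(1) eq[OF Kmax] by simp
      fix K assume "graded_lcs act S K \<and> K 1 = (\<lambda>v. tens [v]) ` vecs_on A"
      then show "K = BV act A" using eq by blast
    qed
  qed
qed

section \<open>Two parts with symmetric braiding\<close>

definition restr :: "'g set \<Rightarrow> ('g,'k::zero) tvec \<Rightarrow> ('g,'k) tvec" where
  "restr T F = (\<lambda>w. if set w \<subseteq> T then F w else 0)"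

lemma braid_restr:
  assumes "conj_closed T"
  shows "braid act i (restr T F) = restr T (braid act i F)"
proof (rule ext)
  fix w
  show "braid act i (restr T F) w = restr T (braid act i F) w"
  proof (cases "Suc i < length w")
    case True
    then obtain p a b q where "w = p @ a # b # q" "length p = i" by (rule split_at_pair)
    then show ?thesis using conj_closed_conjg_iff[OF assms] by (simp add: braid_split restr_def)
  qed (simp add: braid_short restr_def)
qed

lemma psym_restr:
  assumes "conj_closed T"
  shows "psym act m (restr T F) = restr T (psym act m F)"
proof -
  have "chain act k m (restr T F) = restr T (chain act k m F)" for k
    by (rule chain_commute[where P = "\<lambda>_. True", symmetric]) (simp_all add: braid_restr[OF assms])
  then show ?thesis by (simp add: psym_def restr_def fun_eq_iff)
qed

lemma omega_restr: "conj_closed T \<Longrightarrow> omega act m (restr T F) = restr T (omega act m F)"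
  by (induction m arbitrary: F) (simp_all add: omega_Suc psym_restr)

lemma restr_BV:
  assumes "conj_closed T" "F \<in> BV act S n"
  shows "restr T F \<in> BV act (S \<inter> T) n"
proof -
  obtain G where G: "F = omega act n G" "homog G n" "supp_in S G" using assms(2) by (rule BV_E)
  have "homog (restr T G) n" "supp_in (S \<inter> T) (restr T G)"
    using G(2,3) by (auto simp: supported_def restr_def)
  then show ?thesis using BV_I omega_restr[OF assms(1)] G(1) by metis
qed

definition count_in :: "'g set \<Rightarrow> 'g list \<Rightarrow> nat" where
  "count_in T w = length (filter (\<lambda>x. x \<in> T) w)"

lemma swap_stable_count_in: "conj_closed T \<Longrightarrow> swap_stable (\<lambda>w. count_in T w = k)"
  by (simp add: swap_stable_def count_in_def conj_closed_conjg_iff)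

lemma count_in_tconcat:
  fixes a b :: "('g,'k::field) tvec"
  assumes "supp_in T a" "supp_in T' b" "T \<inter> T' = {}"
  shows "supported (\<lambda>w. count_in T w = p) (tconcat p q a b)"
  unfolding supported_def
proof (intro allI impI)
  fix w assume "tconcat p q a b w \<noteq> 0"
  then have "a (take p w) \<noteq> 0" "b (drop p w) \<noteq> 0" and l: "length w = p + q"
    by (auto simp: tconcat_def split: if_splits)
  then have "set (take p w) \<subseteq> T" "set (drop p w) \<subseteq> T'"
    using assms(1,2) by (auto dest: supportedD)
  then have "filter (\<lambda>x. x \<in> T) (take p w) = take p w" "filter (\<lambda>x. x \<in> T) (drop p w) = []"
    using assms(3) by (auto intro: filter_True filter_False)
  then have "count_in T (take p w) = p" "count_in T (drop p w) = 0"
    using l by (simp_all add: count_in_def)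
  then show "count_in T w = p"
    by (metis add.right_neutral append_take_drop_id count_in_def filter_append length_append)
qed

definition sym_braided :: "('g::group_add \<Rightarrow> 'g \<Rightarrow> 'k::field) \<Rightarrow> 'g set \<Rightarrow> 'g set \<Rightarrow> bool" where
  "sym_braided act S1 S2 \<longleftrightarrow> (\<forall>s\<in>S2. \<forall>t\<in>S1. s + t = t + s \<and> act s t * act t s = 1)"

lemma commute_if_conjg_eq:
  assumes "conjg t s = s" shows "s + t = t + s"
proof -
  have "t + conjg t s = s + t" by (rule add_conjg)
  then show ?thesis using assms by simp
qed

lemma sym_braided_if_braid_square:
  fixes act :: "'g::group_add \<Rightarrow> 'g \<Rightarrow> 'k::field"
  assumes "\<forall>s\<in>S2. \<forall>t\<in>S1. braid act 0 (braid act 0 (ebasis [s, t])) = ebasis [s, t]"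
  shows "sym_braided act S1 S2"
  unfolding sym_braided_def
proof (intro ballI)
  fix s t assume "s \<in> S2" "t \<in> S1"
  let ?s' = "conjg t s"
  have "braid act 0 (braid act 0 (ebasis [s, t])) ([] @ s # t # [])
      = act t ?s' * (act ?s' (conjg ?s' t) * (if [?s', conjg ?s' t] = [s, t] then 1 else 0))"
    by (simp only: braid_split list.size(3)) (simp add: ebasis_def)
  then have h: "act t ?s' * (act ?s' (conjg ?s' t) * (if [?s', conjg ?s' t] = [s, t] then 1 else 0)) = (1::'k)"
    using assms \<open>s \<in> S2\<close> \<open>t \<in> S1\<close> by (simp add: ebasis_def)
  then have s': "?s' = s" by (auto split: if_splits)
  then have comm: "s + t = t + s" by (rule commute_if_conjg_eq)
  then have "conjg s t = t" by (intro conjg_commute) simp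
  then show "s + t = t + s \<and> act s t * act t s = 1" using h s' comm by (simp add: mult.commute)
qed

lemma BV_swap_sym_braided:
  assumes S: "conj_closed S" "yd_cocycle act S" "finite S"
    and ab: "a + b = b + a" "act a b * act b a = 1"
    and F: "F \<in> BV act S (length p + Suc (Suc 0) + length q)"
  shows "F (p @ a # b # q) = act b a * F (p @ b # a # q)"
proof -
  have "(\<lambda>v. F (p @ v @ q)) \<in> BV act S (Suc (Suc 0))" by (rule BV_infix[OF S F])
  then obtain g where G: "(\<lambda>v. F (p @ v @ q)) = omega act (Suc (Suc 0)) g"
    by (rule BV_E) blast
  have ev: "omega act (Suc (Suc 0)) g [x, y] = act y (conjg y x) * g [y, conjg y x] + g [x, y]" for x y
    using psym_append_letter[of "[x]" "Suc 0" act g y] by (simp add: omega_2 atMost_Suc gcoeff_Cons)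
  have "conjg b a = a" "conjg a b = b" using conjg_commute ab(1) by (metis, metis)
  then have "F (p @ a # b # q) = act b a * g [b, a] + g [a, b]"
    and "F (p @ b # a # q) = act a b * g [a, b] + g [b, a]"
    using fun_cong[OF G, of "[a, b]"] fun_cong[OF G, of "[b, a]"] ev[of a b] ev[of b a] by simp_all
  then show ?thesis using ab(2) by (simp add: algebra_simps)
qed

lemma BV_move_letter_left:
  assumes S: "conj_closed S" "yd_cocycle act S" "finite S" "sym_braided act S1 S2"
    and F: "F \<in> BV act S n" and x: "x \<in> S1"
  shows "set v \<subseteq> S2 \<Longrightarrow> F (u @ v @ [x]) = 0 \<longleftrightarrow> F (u @ [x] @ v) = 0"
proof (induction v arbitrary: u)
  case (Cons y v)
  have m: "y + x = x + y" "act y x * act x y = 1"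
    using S(4) Cons.prems x unfolding sym_braided_def by auto
  have "F (u @ y # x # v) = 0 \<longleftrightarrow> F (u @ x # y # v) = 0"
  proof (cases "length u + Suc (Suc 0) + length v = n")
    case True
    then have "F (u @ y # x # v) = act x y * F (u @ x # y # v)"
      using BV_swap_sym_braided[OF S(1-3) m] F by blast
    moreover have "act x y \<noteq> 0" using m(2) by auto
    ultimately show ?thesis by simp
  next
    case False
    then show ?thesis using supported_zero[OF homog_BV[OF F]] by simp
  qed
  then show ?case using Cons.IH[of "u @ [y]"] Cons.prems by simp
qed simp

text \<open>By induction on the degree: a trailing letter of S1 can be moved in front of the letters
  of S2 (\<open>BV_move_letter_left\<close>).\<close>

lemma BV_eq_0_if_sorted_0:
  assumes S: "conj_closed S" "yd_cocycle act S" "finite S" "sym_braided act S1 S2"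
    and S12: "S = S1 \<union> S2"
  shows "F \<in> BV act S n \<Longrightarrow> (\<And>u v. set u \<subseteq> S1 \<Longrightarrow> set v \<subseteq> S2 \<Longrightarrow> F (u @ v) = 0) \<Longrightarrow>
    F = (\<lambda>_. 0)"
proof (induction n arbitrary: F)
  case 0
  show ?case
  proof (rule ext)
    fix w
    show "F w = 0"
      using supported_zero[OF homog_BV[OF "0.prems"(1)], of w] "0.prems"(2)[of "[]" "[]"]
      by (cases w) simp_all
  qed
next
  case (Suc m)
  show ?case
  proof (rule zero_by_rderiv[OF homog_BV[OF Suc.prems(1)]])
    fix x
    have "rderiv x F (u @ v) = 0" if uv: "set u \<subseteq> S1" "set v \<subseteq> S2" for u v
    proof -
      consider "x \<notin> S" | "x \<in> S2" | "x \<in> S1" using S12 by blast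
      then show ?thesis
      proof cases
        case 1
        then show ?thesis
          using supported_zero[OF supp_in_BV[OF S(1) Suc.prems(1)], of "u @ v @ [x]"]
          by (simp add: rderiv_def)
      next
        case 2
        then show ?thesis using Suc.prems(2)[of u "v @ [x]"] uv by (simp add: rderiv_def)
      next
        case 3
        then have "F (u @ [x] @ v) = 0" using Suc.prems(2)[of "u @ [x]" v] uv by simp
        then show ?thesis
          using BV_move_letter_left[OF S(1-4) Suc.prems(1) 3 uv(2)] by (simp add: rderiv_def)
      qed
    qed
    then show "rderiv x F = (\<lambda>_. 0)" by (rule Suc.IH[OF rderiv_BV[OF S(1) Suc.prems(1)]])
  qed
qed

text \<open>On a sorted word only the trivial shuffle contributes: a letter of S2 is never moved into
  the S1 part.\<close>

lemma omega_tconcat_sorted: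
  assumes S: "conj_closed S1" "conj_closed S2" "S1 \<inter> S2 = {}"
    and a: "homog a p" "supp_in S1 a" and u: "length u = p"
  shows "homog b q \<Longrightarrow> supp_in S2 b \<Longrightarrow> set v \<subseteq> S2 \<Longrightarrow> length v = q \<Longrightarrow>
    omega act (p + q) (tconcat p q a b) (u @ v) = omega act p a u * omega act q b v"
proof (induction q arbitrary: b v)
  case 0
  then show ?case by (simp add: omega_tconcat_0r[OF a(1)] mult.commute)
next
  case (Suc q)
  obtain v' x where vx: "v = v' @ [x]" using Suc.prems(4) by (metis length_Suc_conv_rev)
  have x: "x \<in> S2" and v': "set v' \<subseteq> S2" "length v' = q" using Suc.prems(3,4) vx by auto
  show ?case
  proof (cases p)
    case 0
    then show ?thesis using u by (simp add: omega_tconcat_0l[OF Suc.prems(1)])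
  next
    case (Suc p')
    let ?b1 = "rderiv x (psym act q b)"
    have "supp_in S1 (psym act p' a)" by (rule supp_in_psym[OF S(1) a(2)])
    then have "rderiv x (psym act p' a) = (\<lambda>_. 0)"
      using x S(3) by (force simp: rderiv_def supported_def fun_eq_iff)
    then have "tconcat p' (Suc q) (rderiv x (psym act p' a)) (gact act x b) = (\<lambda>_. 0)"
      by (simp add: tconcat_def fun_eq_iff)
    then have e: "rderiv x (omega act (Suc p' + Suc q) (tconcat (Suc p') (Suc q) a b))
        = omega act (Suc p' + q) (tconcat (Suc p') q a ?b1)"
      using omega_tconcat_rderiv[OF a(1)[unfolded Suc] Suc.prems(1), of x act]
      by (simp add: omega_zero)
    have "omega act (p + Suc q) (tconcat p (Suc q) a b) (u @ v)
        = rderiv x (omega act (Suc p' + Suc q) (tconcat (Suc p') (Suc q) a b)) (u @ v')"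
      using Suc vx by (simp add: rderiv_def)
    also have "\<dots> = omega act (Suc p') a u * omega act q ?b1 v'"
      unfolding e using Suc.IH[OF homog_rderiv[OF homog_psym[OF Suc.prems(1)]]
          supp_in_rderiv[OF supp_in_psym[OF S(2) Suc.prems(2)]] v'] Suc by simp
    also have "\<dots> = omega act p a u * omega act (Suc q) b v"
      using fun_cong[OF rderiv_omega_Suc[OF Suc.prems(1), of x act], of v'] Suc vx
      by (simp add: rderiv_def)
    finally show ?thesis .
  qed
qed

section \<open>Decomposing the largest coideal subalgebra\<close>

lemma unitv_in_subcomodule:
  assumes "subcomodule S W" "w \<in> W" "w g \<noteq> 0"
  shows "unitv g \<in> W"
proof -
  have "(\<lambda>x. if x = g then w g else 0) \<in> W" and W: "vsubspace W"
    using assms(1,2) unfolding subcomodule_def by blast+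
  then have "(\<lambda>u. inverse (w g) * (if u = g then w g else 0)) \<in> W" by (rule vsubspace_smult[rotated])
  moreover have "(\<lambda>u. inverse (w g) * (if u = g then w g else 0)) = unitv g"
    using assms(3) by (auto simp: unitv_def fun_eq_iff)
  ultimately show ?thesis by simp
qed

lemma vecs_on_subset:
  fixes W :: "('g \<Rightarrow> 'k::field) set"
  assumes W: "vsubspace W" and A: "finite A" "\<And>g. g \<in> A \<Longrightarrow> unitv g \<in> W"
  shows "vecs_on A \<subseteq> W"
proof
  fix w :: "'g \<Rightarrow> 'k" assume w: "w \<in> vecs_on A"
  have "w u = (\<Sum>g\<in>A. w g * unitv g u)" for u
  proof -
    have "(\<Sum>g\<in>A. w g * unitv g u) = (\<Sum>g\<in>A. if g = u then w u else 0)"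
      by (rule sum.cong) (auto simp: unitv_def)
    also have "\<dots> = (if u \<in> A then w u else 0)" using A(1) by simp
    also have "\<dots> = w u" using w by (auto simp: vecs_on_def)
    finally show ?thesis by simp
  qed
  then have "w = (\<lambda>u. \<Sum>g\<in>A. w g * unitv g u)" by (rule ext)
  moreover have "(\<lambda>u. \<Sum>g\<in>A. w g * unitv g u) \<in> W"
    by (rule vsubspace_sum[OF W A(1)]) (rule vsubspace_smult[OF W A(2)])
  ultimately show "w \<in> W" by simp
qed

lemma subcomodule_eq_vecs_on:
  fixes W :: "('g \<Rightarrow> 'k::field) set"
  assumes W: "subcomodule S W" and S: "finite S"
  obtains A where "A \<subseteq> S" "W = vecs_on A"
proof
  let ?A = "{g. unitv g \<in> W}"
  show A: "?A \<subseteq> S"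
  proof
    fix g assume "g \<in> ?A"
    moreover have "(unitv g :: 'g \<Rightarrow> 'k) g \<noteq> 0" by (simp add: unitv_def)
    ultimately show "g \<in> S" using W unfolding subcomodule_def by blast
  qed
  show "W = vecs_on ?A"
  proof
    show "W \<subseteq> vecs_on ?A" using unitv_in_subcomodule[OF W] by (auto simp: vecs_on_def)
    have "vsubspace W" using W by (simp add: subcomodule_def)
    then show "vecs_on ?A \<subseteq> W" using A S by (intro vecs_on_subset) (auto intro: finite_subset)
  qed
qed

lemma vecs_on_Un:
  "{(\<lambda>g. w1 g + w2 g) | w1 w2. w1 \<in> vecs_on A1 \<and> w2 \<in> vecs_on A2}
    = (vecs_on (A1 \<union> A2) :: ('g \<Rightarrow> 'k::field) set)" (is "?L = ?R")
proof
  show "?L \<subseteq> ?R"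
  proof
    fix w assume "w \<in> ?L"
    then obtain w1 w2 where w: "w = (\<lambda>g. w1 g + w2 g)" "w1 \<in> vecs_on A1" "w2 \<in> vecs_on A2"
      by blast
    show "w \<in> ?R" unfolding vecs_on_def
    proof (intro CollectI allI impI)
      fix g assume "w g \<noteq> 0"
      then show "g \<in> A1 \<union> A2" using w unfolding vecs_on_def by (cases "w1 g = 0") auto
    qed
  qed
  show "?R \<subseteq> ?L"
  proof
    fix w :: "'g \<Rightarrow> 'k" assume "w \<in> ?R"
    then have "(\<lambda>g. if g \<in> A1 then w g else 0) \<in> vecs_on A1"
      "(\<lambda>g. if g \<in> A1 then 0 else w g) \<in> vecs_on A2"
      "w = (\<lambda>g. (if g \<in> A1 then w g else 0) + (if g \<in> A1 then 0 else w g))"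
      by (auto simp: vecs_on_def)
    then show "w \<in> ?L" by (intro CollectI exI conjI) (assumption+)
  qed
qed

lemma YD_data_conj_closed: "YD_data act S \<Longrightarrow> conj_closed S"
  unfolding YD_data_def conj_closed_def by blast

lemma YD_data_yd_cocycle: "YD_data act S \<Longrightarrow> yd_cocycle act S"
  unfolding YD_data_def yd_cocycle_def by blast

lemma YD_data_finite: "YD_data act S \<Longrightarrow> finite S"
  unfolding YD_data_def by blast

lemma conj_closed_Un: "conj_closed S1 \<Longrightarrow> conj_closed S2 \<Longrightarrow> conj_closed (S1 \<union> S2)"
  unfolding conj_closed_def by blast

lemma yd_cocycle_Un: "yd_cocycle act S1 \<Longrightarrow> yd_cocycle act S2 \<Longrightarrow> yd_cocycle act (S1 \<union> S2)"
  unfolding yd_cocycle_def by blast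

lemma Kmax_sub_BV_restrict:
  assumes S: "conj_closed T" "T \<subseteq> S" and H: "\<And>n. Kmax act S A n \<subseteq> BV act A n"
  shows "Kmax act T (A \<inter> T) n \<subseteq> BV act (A \<inter> T) n"
proof
  fix f assume f: "f \<in> Kmax act T (A \<inter> T) n"
  then have "f \<in> Kmax act S A n" using BV_mono[OF S(2)] unfolding Kmax_def by blast
  then have "restr T f \<in> BV act (A \<inter> T) n" using H by (intro restr_BV[OF S(1)]) blast
  moreover have "f \<in> BV act T n" using f unfolding Kmax_def by blast
  then have "supp_in T f" by (rule supp_in_BV[OF S(1)])
  then have "restr T f = f" using supportedD by (auto simp: restr_def fun_eq_iff)
  ultimately show "f \<in> BV act (A \<inter> T) n" by simp
qed

lemma tspan_mono: "A \<subseteq> A' \<Longrightarrow> C \<subseteq> C' \<Longrightarrow> tspan A C \<subseteq> tspan A' C'"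
  unfolding tspan_def by blast

definition sorted_block :: "'g set \<Rightarrow> 'g set \<Rightarrow> nat \<Rightarrow> nat \<Rightarrow> ('g,'k::zero) tvec \<Rightarrow> ('g list \<times> 'g list \<Rightarrow> 'k)" where
  "sorted_block S1 S2 p q f = (\<lambda>(u, v).
     if set u \<subseteq> S1 \<and> length u = p \<and> set v \<subseteq> S2 \<and> length v = q then f (u @ v) else 0)"

context
  fixes act :: "'g::group_add \<Rightarrow> 'g \<Rightarrow> 'k::field" and S1 S2 A1 A2 :: "'g set"
  assumes S1: "conj_closed S1" "yd_cocycle act S1" "finite S1"
    and S2: "conj_closed S2" "yd_cocycle act S2" "finite S2"
    and disj: "S1 \<inter> S2 = {}" and sym: "sym_braided act S1 S2"
    and A: "A1 \<subseteq> S1" "A2 \<subseteq> S2"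
begin

lemma Un_assms: "conj_closed (S1 \<union> S2)" "yd_cocycle act (S1 \<union> S2)" "finite (S1 \<union> S2)"
  using S1 S2 by (simp_all add: conj_closed_Un yd_cocycle_Un)

lemma Kmax_Un_left_slice:
  assumes f: "f \<in> Kmax act (S1 \<union> S2) (A1 \<union> A2) (p + length v)" and v: "set v \<subseteq> S2"
  shows "restr S1 (\<lambda>u. f (u @ v)) \<in> Kmax act S1 A1 p"
  unfolding Kmax_def
proof (intro CollectI conjI allI impI)
  have "(\<lambda>u. f (u @ v)) \<in> BV act (S1 \<union> S2) p"
    using f by (intro BV_suffix[OF Un_assms(1)]) (simp add: Kmax_def)
  from restr_BV[OF S1(1) this] show "restr S1 (\<lambda>u. f (u @ v)) \<in> BV act S1 p"
    by (simp add: Int_absorb1)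
  fix u x assume "x \<notin> A1"
  show "restr S1 (\<lambda>u. f (u @ v)) (u @ [x]) = 0"
  proof (cases "set (u @ [x]) \<subseteq> S1")
    case True
    then have x: "x \<in> S1" "x \<notin> A1 \<union> A2" using \<open>x \<notin> A1\<close> A disj by auto
    then have "f ((u @ v) @ [x]) = 0" using f unfolding Kmax_def by blast
    moreover have "f \<in> BV act (S1 \<union> S2) (p + length v)" using f unfolding Kmax_def by blast
    note BV_move_letter_left[OF Un_assms sym this x(1) v, of u]
    ultimately show ?thesis using True by (simp add: restr_def)
  qed (auto simp: restr_def)
qed

lemma Kmax_Un_right_slice:
  assumes f: "f \<in> Kmax act (S1 \<union> S2) (A1 \<union> A2) (length u + q)"
  shows "restr S2 (\<lambda>v. f (u @ v)) \<in> Kmax act S2 A2 q"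
  unfolding Kmax_def
proof (intro CollectI conjI allI impI)
  have "(\<lambda>v. f (u @ v)) \<in> BV act (S1 \<union> S2) q"
    using f by (intro BV_prefix[OF Un_assms]) (simp add: Kmax_def)
  from restr_BV[OF S2(1) this] show "restr S2 (\<lambda>v. f (u @ v)) \<in> BV act S2 q"
    by (simp add: Int_absorb1)
  fix v x assume "x \<notin> A2"
  then have "set (v @ [x]) \<subseteq> S2 \<Longrightarrow> x \<notin> A1 \<union> A2" using A disj by auto
  moreover have "x \<notin> A1 \<union> A2 \<Longrightarrow> f ((u @ v) @ [x]) = 0" using f unfolding Kmax_def by blast
  ultimately show "restr S2 (\<lambda>v. f (u @ v)) (v @ [x]) = 0" by (auto simp: restr_def)
qed

lemma sorted_block_tspan:
  assumes f: "f \<in> Kmax act (S1 \<union> S2) (A1 \<union> A2) (p + q)"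
  shows "sorted_block S1 S2 p q f \<in> tspan (Kmax act S1 A1 p) (Kmax act S2 A2 q)"
proof (rule tspan_of_slices[OF vsubspace_Kmax vsubspace_Kmax finite_words[OF S1(3)]])
  have "f \<in> BV act (S1 \<union> S2) (p + q)" using f unfolding Kmax_def by blast
  then have f0: "f (u @ v) = 0" if "length u + length v \<noteq> p + q" for u v
    using supported_zero[OF homog_BV, of f] that by simp
  show "\<forall>u v. sorted_block S1 S2 p q f (u, v) \<noteq> 0 \<longrightarrow> u \<in> words S1 p"
    by (auto simp: sorted_block_def words_def split: if_splits)
  show "\<forall>v. (\<lambda>u. sorted_block S1 S2 p q f (u, v)) \<in> Kmax act S1 A1 p"
  proof
    fix v
    show "(\<lambda>u. sorted_block S1 S2 p q f (u, v)) \<in> Kmax act S1 A1 p"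
    proof (cases "set v \<subseteq> S2 \<and> length v = q")
      case True
      then have "(\<lambda>u. sorted_block S1 S2 p q f (u, v)) = restr S1 (\<lambda>u. f (u @ v))"
        using f0 by (auto simp: sorted_block_def restr_def fun_eq_iff)
      then show ?thesis using Kmax_Un_left_slice True f by simp
    next
      case False
      then have "(\<lambda>u. sorted_block S1 S2 p q f (u, v)) = (\<lambda>_. 0)"
        by (auto simp: sorted_block_def fun_eq_iff)
      then show ?thesis using vsubspace_zero[OF vsubspace_Kmax] by simp
    qed
  qed
  show "\<forall>u. (\<lambda>v. sorted_block S1 S2 p q f (u, v)) \<in> Kmax act S2 A2 q"
  proof
    fix u
    show "(\<lambda>v. sorted_block S1 S2 p q f (u, v)) \<in> Kmax act S2 A2 q"
    proof (cases "set u \<subseteq> S1 \<and> length u = p")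
      case True
      then have "(\<lambda>v. sorted_block S1 S2 p q f (u, v)) = restr S2 (\<lambda>v. f (u @ v))"
        using f0 by (auto simp: sorted_block_def restr_def fun_eq_iff)
      then show ?thesis using Kmax_Un_right_slice True f by simp
    next
      case False
      then have "(\<lambda>v. sorted_block S1 S2 p q f (u, v)) = (\<lambda>_. 0)"
        by (auto simp: sorted_block_def fun_eq_iff)
      then show ?thesis using vsubspace_zero[OF vsubspace_Kmax] by simp
    qed
  qed
qed

lemma BV_tensor_realised:
  assumes c: "c \<in> BV act A1 p" and d: "d \<in> BV act A2 q"
  shows "\<exists>g\<in>BV act (A1 \<union> A2) (p + q). \<forall>u v. set u \<subseteq> S1 \<longrightarrow> set v \<subseteq> S2 \<longrightarrow>
    g (u @ v) = (if length u = p then c u * d v else 0)"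
proof -
  obtain a where a: "c = omega act p a" "homog a p" "supp_in A1 a" using c by (rule BV_E)
  obtain b where b: "d = omega act q b" "homog b q" "supp_in A2 b" using d by (rule BV_E)
  have a1: "supp_in S1 a" and b2: "supp_in S2 b" using a(3) b(3) A by (auto elim: supp_in_mono)
  let ?g = "omega act (p + q) (tconcat p q a b)"
  have "supp_in (A1 \<union> A2) a" "supp_in (A1 \<union> A2) b" using a(3) b(3) by (auto elim: supp_in_mono)
  then have "?g \<in> BV act (A1 \<union> A2) (p + q)" by (intro BV_I homog_tconcat supp_in_tconcat)
  moreover have "?g (u @ v) = (if length u = p then c u * d v else 0)"
    if uv: "set u \<subseteq> S1" "set v \<subseteq> S2" for u v
  proof (cases "length u = p")
    case False
    have "supported (\<lambda>w. count_in S1 w = p) ?g"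
      by (rule supported_omega[OF swap_stable_count_in[OF S1(1)] count_in_tconcat[OF a1 b2 disj]])
    moreover have "filter (\<lambda>x. x \<in> S1) u = u" "filter (\<lambda>x. x \<in> S1) v = []"
      using uv disj by (auto intro: filter_True filter_False)
    then have "count_in S1 (u @ v) = length u" by (simp add: count_in_def)
    ultimately show ?thesis using False supported_zero by fastforce
  next
    case True
    show ?thesis
    proof (cases "length v = q")
      case True
      then show ?thesis
        using omega_tconcat_sorted[OF S1(1) S2(1) disj a(2) a1 \<open>length u = p\<close> b(2) b2 uv(2)] a b
          \<open>length u = p\<close> by simp
    next
      case False
      have "homog ?g (p + q)" by (rule homog_omega[OF homog_tconcat])
      then show ?thesis
        using False \<open>length u = p\<close> supported_zero[OF homog_BV[OF d], of v]
          supported_zero[of _ ?g "u @ v"] by simp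
    qed
  qed
  ultimately show ?thesis by blast
qed

lemma tspan_BV_realised:
  assumes H: "H \<in> tspan (BV act A1 p) (BV act A2 q)"
  shows "\<exists>g\<in>BV act (A1 \<union> A2) (p + q). \<forall>u v. set u \<subseteq> S1 \<longrightarrow> set v \<subseteq> S2 \<longrightarrow>
    g (u @ v) = (if length u = p then H (u, v) else 0)"
proof -
  obtain ps where ps: "set ps \<subseteq> BV act A1 p \<times> BV act A2 q"
    "H = (\<lambda>(u, v). sum_list (map (\<lambda>(c, d). c u * d v) ps))"
    using H unfolding tspan_def by blast
  have "\<exists>g\<in>BV act (A1 \<union> A2) (p + q). \<forall>u v. set u \<subseteq> S1 \<longrightarrow> set v \<subseteq> S2 \<longrightarrow>
    g (u @ v) = (if length u = p then sum_list (map (\<lambda>(c, d). c u * d v) ps) else 0)"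
    using ps(1)
  proof (induction ps)
    case Nil
    then show ?case using vsubspace_zero[OF vsubspace_BV] by fastforce
  next
    case (Cons cd ps)
    have "fst cd \<in> BV act A1 p" "snd cd \<in> BV act A2 q" using Cons.prems by auto
    from BV_tensor_realised[OF this] obtain g1 where g1: "g1 \<in> BV act (A1 \<union> A2) (p + q)" "\<forall>u v. set u \<subseteq> S1 \<longrightarrow> set v \<subseteq> S2 \<longrightarrow>
        g1 (u @ v) = (if length u = p then fst cd u * snd cd v else 0)"
      by blast
    obtain g2 where g2: "g2 \<in> BV act (A1 \<union> A2) (p + q)" "\<forall>u v. set u \<subseteq> S1 \<longrightarrow> set v \<subseteq> S2 \<longrightarrow>
        g2 (u @ v) = (if length u = p then sum_list (map (\<lambda>(c, d). c u * d v) ps) else 0)"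
      using Cons by auto
    show ?case
      using vsubspace_add[OF vsubspace_BV g1(1) g2(1)] g1(2) g2(2)
      by (intro bexI[of _ "\<lambda>w. g1 w + g2 w"]) (auto simp: case_prod_unfold)
  qed
  then show ?thesis by (simp only: ps(2) prod.case)
qed

lemma Kmax_sub_BV_Un:
  assumes H1: "\<And>n. Kmax act S1 A1 n \<subseteq> BV act A1 n" and H2: "\<And>n. Kmax act S2 A2 n \<subseteq> BV act A2 n"
  shows "Kmax act (S1 \<union> S2) (A1 \<union> A2) n \<subseteq> BV act (A1 \<union> A2) n"
proof
  fix f assume f: "f \<in> Kmax act (S1 \<union> S2) (A1 \<union> A2) n"
  then have fB: "f \<in> BV act (S1 \<union> S2) n" unfolding Kmax_def by blast
  let ?B = "\<lambda>p. sorted_block S1 S2 p (n - p) f"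
  have "\<forall>p\<in>{..n}. \<exists>g\<in>BV act (A1 \<union> A2) n. \<forall>u v. set u \<subseteq> S1 \<longrightarrow> set v \<subseteq> S2 \<longrightarrow>
      g (u @ v) = (if length u = p then ?B p (u, v) else 0)"
  proof
    fix p assume "p \<in> {..n}"
    then have "f \<in> Kmax act (S1 \<union> S2) (A1 \<union> A2) (p + (n - p))" using f by simp
    then have B: "?B p \<in> tspan (BV act A1 p) (BV act A2 (n - p))"
      using sorted_block_tspan tspan_mono[OF H1 H2] by blast
    show "\<exists>g\<in>BV act (A1 \<union> A2) n. \<forall>u v. set u \<subseteq> S1 \<longrightarrow> set v \<subseteq> S2 \<longrightarrow>
        g (u @ v) = (if length u = p then ?B p (u, v) else 0)"
      using tspan_BV_realised[OF B] \<open>p \<in> {..n}\<close> by simp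
  qed
  then obtain g where g: "\<forall>p\<in>{..n}. g p \<in> BV act (A1 \<union> A2) n \<and> (\<forall>u v. set u \<subseteq> S1 \<longrightarrow>
      set v \<subseteq> S2 \<longrightarrow> g p (u @ v) = (if length u = p then ?B p (u, v) else 0))"
    by metis
  have gB: "(\<lambda>w. \<Sum>p\<le>n. g p w) \<in> BV act (A1 \<union> A2) n"
    using g by (intro vsubspace_sum[OF vsubspace_BV]) auto
  have "(\<lambda>w. f w - (\<Sum>p\<le>n. g p w)) = (\<lambda>_. 0)"
  proof (rule BV_eq_0_if_sorted_0[OF Un_assms sym refl])
    show "(\<lambda>w. f w - (\<Sum>p\<le>n. g p w)) \<in> BV act (S1 \<union> S2) n"
      using gB BV_mono[of "A1 \<union> A2" "S1 \<union> S2"] A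
      by (intro vsubspace_diff[OF vsubspace_BV fB]) blast
    fix u v assume uv: "set u \<subseteq> S1" "set v \<subseteq> S2"
    have "(\<Sum>p\<le>n. g p (u @ v)) = (\<Sum>p\<le>n. if length u = p then ?B p (u, v) else 0)"
      using g uv by (intro sum.cong) auto
    also have "\<dots> = f (u @ v)"
      using supported_zero[OF homog_BV[OF fB], of "u @ v"] uv
      by (auto simp: sorted_block_def)
    finally show "f (u @ v) - (\<Sum>p\<le>n. g p (u @ v)) = 0" by simp
  qed
  then have "f = (\<lambda>w. \<Sum>p\<le>n. g p w)" by (simp add: fun_eq_iff)
  with gB show "f \<in> BV act (A1 \<union> A2) n" by simp
qed

lemma Kmax_sub_BV_Un_iff:
  "(\<forall>n. Kmax act (S1 \<union> S2) (A1 \<union> A2) n \<subseteq> BV act (A1 \<union> A2) n) \<longleftrightarrow>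
    (\<forall>n. Kmax act S1 A1 n \<subseteq> BV act A1 n) \<and> (\<forall>n. Kmax act S2 A2 n \<subseteq> BV act A2 n)"
proof
  assume H: "\<forall>n. Kmax act (S1 \<union> S2) (A1 \<union> A2) n \<subseteq> BV act (A1 \<union> A2) n"
  have "Kmax act S1 ((A1 \<union> A2) \<inter> S1) n \<subseteq> BV act ((A1 \<union> A2) \<inter> S1) n"
    and "Kmax act S2 ((A1 \<union> A2) \<inter> S2) n \<subseteq> BV act ((A1 \<union> A2) \<inter> S2) n" for n
    by (rule Kmax_sub_BV_restrict[OF S1(1) _ H[rule_format]] Kmax_sub_BV_restrict[OF S2(1) _ H[rule_format]];
        blast)+
  moreover have "(A1 \<union> A2) \<inter> S1 = A1" "(A1 \<union> A2) \<inter> S2 = A2" using A disj by auto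
  ultimately show "(\<forall>n. Kmax act S1 A1 n \<subseteq> BV act A1 n) \<and> (\<forall>n. Kmax act S2 A2 n \<subseteq> BV act A2 n)"
    by simp
qed (simp add: Kmax_sub_BV_Un)

end

theorem mainTheorem9:
  fixes act :: "'g::group_add \<Rightarrow> 'g \<Rightarrow> 'k::field_char_0"
    and S1 S2 :: "'g set" and W1 W2 :: "('g \<Rightarrow> 'k) set"
  assumes alg_closed: "\<forall>p :: 'k poly. degree p \<noteq> 0 \<longrightarrow> (\<exists>x. poly p x = 0)"
    and YD1: "YD_data act S1" and YD2: "YD_data act S2"
    and disj: "S1 \<inter> S2 = {}"
    and csq: "\<forall>s\<in>S2. \<forall>t\<in>S1. braid act 0 (braid act 0 (ebasis [s, t])) = ebasis [s, t]"
    and W1: "subcomodule S1 W1" and W2: "subcomodule S2 W2"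
  shows "unique_lcs act (S1 \<union> S2) {(\<lambda>g. w1 g + w2 g) | w1 w2. w1 \<in> W1 \<and> w2 \<in> W2}
     \<longleftrightarrow> (unique_lcs act S1 W1 \<and> unique_lcs act S2 W2)"
proof -
  have S1: "conj_closed S1" "yd_cocycle act S1" "finite S1"
    and S2: "conj_closed S2" "yd_cocycle act S2" "finite S2"
    using YD1 YD2 by (simp_all add: YD_data_conj_closed YD_data_yd_cocycle YD_data_finite)
  have S: "conj_closed (S1 \<union> S2)" "yd_cocycle act (S1 \<union> S2)" "finite (S1 \<union> S2)"
    using S1 S2 by (simp_all add: conj_closed_Un yd_cocycle_Un)
  obtain A1 where A1: "A1 \<subseteq> S1" "W1 = vecs_on A1" using subcomodule_eq_vecs_on[OF W1 S1(3)] .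
  obtain A2 where A2: "A2 \<subseteq> S2" "W2 = vecs_on A2" using subcomodule_eq_vecs_on[OF W2 S2(3)] .
  have W: "{(\<lambda>g. w1 g + w2 g) | w1 w2. w1 \<in> W1 \<and> w2 \<in> W2} = vecs_on (A1 \<union> A2)"
    unfolding A1(2) A2(2) by (rule vecs_on_Un)
  have A: "A1 \<union> A2 \<subseteq> S1 \<union> S2" using A1 A2 by blast
  have sym: "sym_braided act S1 S2" by (rule sym_braided_if_braid_square[OF csq])
  show ?thesis
    unfolding W unfolding A1(2) A2(2) unique_lcs_iff_Kmax_sub_BV[OF S A]
      unique_lcs_iff_Kmax_sub_BV[OF S1 A1(1)] unique_lcs_iff_Kmax_sub_BV[OF S2 A2(1)]
    by (rule Kmax_sub_BV_Un_iff[OF S1 S2 disj sym A1(1) A2(1)])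
qed

end
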